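(* Let $(E,\|\cdot\|)$ be an $n$-dimensional normed space over $K$. Then $E$ satisfies (SE) if and only if the following two conditions hold: (1) each $(n-1)$-dimensional subspace of $E$ satisfies (SE); (2) each $2$-dimensional subspace $F$ of $E'$ satisfies either $\dim_{K^\vee}F^\vee=2$, or $F\cong([1,x],|\cdot|_t)$ for some $x\in K^\vee\setminus K$ and $t>0$ with $t\cdot d(x,K)\notin V_K$.
   Context: $K$ is a complete non-archimedean non-trivially valued field which is not spherically complete, with valuation group $V_K=\{|x|:x\in K\setminus\{0\}\}$; $K^\vee$ is a fixed spherically complete immediate extension of $K$. Normed spaces are finite-dimensional non-archimedean normed spaces over $K$; $E'$ is the dual with operator norm; $\cong$ denotes isometric isomorphism. A normed space $E$ satisfies (SE) if for each subspace $D\subseteq E$ and each $f\in D'$ with $\|f\|=1$ there is an extension $\tilde f\in E'$ of $f$ with $\|\tilde f\|=1$. A subset $X\subseteq E\setminus\{0\}$ is orthogonal if $\|\sum\lambda_ix_i\|=\max\|\lambda_ix_i\|$ for finitely many distinct $x_i\in X$; $\dim_{K^\vee}E^\vee$ denotes the cardinality of a maximal orthogonal subset of $E$. For $t>0$, $([1,x],|\cdot|_t)$ is the $K$-linear span of $1,x$ in $K^\vee$ with norm $|z|_t=t|z|$; $d(x,K)=\inf_{a\in K}|x-a|$. *)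

theory Defs
  imports "HOL-Analysis.Analysis" "HOL-Library.Function_Algebras"
begin

definition nonarch_abs :: "('a::field \<Rightarrow> real) \<Rightarrow> bool" where
  "nonarch_abs v \<longleftrightarrow> (\<forall>x. 0 \<le> v x) \<and> (\<forall>x. v x = 0 \<longleftrightarrow> x = 0)
     \<and> (\<forall>x y. v (x * y) = v x * v y) \<and> (\<forall>x y. v (x + y) \<le> max (v x) (v y))"

definition nontrivial_abs :: "('a::field \<Rightarrow> real) \<Rightarrow> bool" where
  "nontrivial_abs v \<longleftrightarrow> (\<exists>x. x \<noteq> 0 \<and> v x \<noteq> 1)"

definition abs_complete :: "('a::field \<Rightarrow> real) \<Rightarrow> bool" where
  "abs_complete v \<longleftrightarrow> (\<forall>s::nat \<Rightarrow> 'a.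
     (\<forall>e>0. \<exists>M. \<forall>m\<ge>M. \<forall>k\<ge>M. v (s m - s k) < e)
       \<longrightarrow> (\<exists>l. \<forall>e>0. \<exists>M. \<forall>k\<ge>M. v (s k - l) < e))"

definition vball :: "('a::field \<Rightarrow> real) \<Rightarrow> 'a \<Rightarrow> real \<Rightarrow> 'a set" where
  "vball v c r = {y. v (y - c) \<le> r}"

definition spherically_complete :: "('a::field \<Rightarrow> real) \<Rightarrow> bool" where
  "spherically_complete v \<longleftrightarrow> (\<forall>(c::nat \<Rightarrow> 'a) (r::nat \<Rightarrow> real).
     (\<forall>k. 0 < r k) \<and> (\<forall>k. vball v (c (Suc k)) (r (Suc k)) \<subseteq> vball v (c k) (r k))
       \<longrightarrow> (\<Inter>k. vball v (c k) (r k)) \<noteq> {})"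

definition value_group :: "('a::field \<Rightarrow> real) \<Rightarrow> real set" where
  "value_group v = {v x | x. x \<noteq> 0}"

text \<open>\<open>(L, bv)\<close> is an immediate extension of \<open>(K, av)\<close> via the embedding \<open>\<iota>\<close>:
  \<open>\<iota>\<close> is a field homomorphism preserving the absolute value, the value groups coincide
  and the residue field of \<open>L\<close> is the image of the residue field of \<open>K\<close>.\<close>
definition immediate_extension ::
  "('a::field \<Rightarrow> real) \<Rightarrow> ('b::field \<Rightarrow> real) \<Rightarrow> ('a \<Rightarrow> 'b) \<Rightarrow> bool" where
  "immediate_extension av bv \<iota> \<longleftrightarrow>
     (\<forall>a c. \<iota> (a + c) = \<iota> a + \<iota> c) \<and> (\<forall>a c. \<iota> (a * c) = \<iota> a * \<iota> c) \<and> \<iota> 1 = 1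
     \<and> (\<forall>a. bv (\<iota> a) = av a)
     \<and> value_group bv = value_group av
     \<and> (\<forall>y. bv y \<le> 1 \<longrightarrow> (\<exists>a. av a \<le> 1 \<and> bv (y - \<iota> a) < 1))"

text \<open>A normed space is given by a scalar multiplication \<open>sc\<close> (a K-vector space
  structure on the ambient type), a carrier subspace \<open>E\<close> and a norm \<open>N\<close> on \<open>E\<close>.\<close>
definition na_normed_space ::
  "('a::field \<Rightarrow> real) \<Rightarrow> ('a \<Rightarrow> 'e::ab_group_add \<Rightarrow> 'e) \<Rightarrow> 'e set \<Rightarrow> ('e \<Rightarrow> real) \<Rightarrow> bool" where
  "na_normed_space av sc E N \<longleftrightarrow> module.subspace sc E
     \<and> (\<forall>x\<in>E. 0 \<le> N x) \<and> (\<forall>x\<in>E. N x = 0 \<longleftrightarrow> x = 0)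
     \<and> (\<forall>c. \<forall>x\<in>E. N (sc c x) = av c * N x)
     \<and> (\<forall>x\<in>E. \<forall>y\<in>E. N (x + y) \<le> max (N x) (N y))"

definition fin_dim :: "('a::field \<Rightarrow> 'e::ab_group_add \<Rightarrow> 'e) \<Rightarrow> 'e set \<Rightarrow> bool" where
  "fin_dim sc E \<longleftrightarrow> (\<exists>B. finite B \<and> B \<subseteq> E \<and> module.span sc B = E)"

text \<open>Linear functionals on a subspace \<open>D\<close>, normalised to be zero outside \<open>D\<close>.\<close>
definition dual :: "('a::field \<Rightarrow> 'e::ab_group_add \<Rightarrow> 'e) \<Rightarrow> 'e set \<Rightarrow> ('e \<Rightarrow> 'a) set" where
  "dual sc D = {f. (\<forall>x\<in>D. \<forall>y\<in>D. f (x + y) = f x + f y)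
                    \<and> (\<forall>c. \<forall>x\<in>D. f (sc c x) = c * f x)
                    \<and> (\<forall>x. x \<notin> D \<longrightarrow> f x = 0)}"

definition dscale :: "'a::field \<Rightarrow> ('e \<Rightarrow> 'a) \<Rightarrow> ('e \<Rightarrow> 'a)" where
  "dscale c f = (\<lambda>x. c * f x)"

definition opnorm :: "('a::field \<Rightarrow> real) \<Rightarrow> 'e::zero set \<Rightarrow> ('e \<Rightarrow> real) \<Rightarrow> ('e \<Rightarrow> 'a) \<Rightarrow> real" where
  "opnorm av D N f = Sup ({av (f x) / N x | x. x \<in> D \<and> x \<noteq> 0} \<union> {0})"

definition SE ::
  "('a::field \<Rightarrow> real) \<Rightarrow> ('a \<Rightarrow> 'e::ab_group_add \<Rightarrow> 'e) \<Rightarrow> 'e set \<Rightarrow> ('e \<Rightarrow> real) \<Rightarrow> bool" where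
  "SE av sc E N \<longleftrightarrow> (\<forall>D f. module.subspace sc D \<and> D \<subseteq> E \<and> f \<in> dual sc D
       \<and> opnorm av D N f = 1
     \<longrightarrow> (\<exists>g \<in> dual sc E. (\<forall>x\<in>D. g x = f x) \<and> opnorm av E N g = 1))"

text \<open>Orthogonal subsets and \<open>dim_{K^\<or>} E^\<or>\<close> (cardinality of a maximal orthogonal subset).\<close>
definition na_orthogonal ::
  "('a::field \<Rightarrow> 'e::ab_group_add \<Rightarrow> 'e) \<Rightarrow> 'e set \<Rightarrow> ('e \<Rightarrow> real) \<Rightarrow> 'e set \<Rightarrow> bool" where
  "na_orthogonal sc E N X \<longleftrightarrow> X \<subseteq> E - {0} \<and>
     (\<forall>Y (l::'e \<Rightarrow> 'a). finite Y \<and> Y \<subseteq> X \<and> Y \<noteq> {} \<longrightarrow>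
        N (\<Sum>y\<in>Y. sc (l y) y) = Max ((\<lambda>y. N (sc (l y) y)) ` Y))"

definition max_orthogonal ::
  "('a::field \<Rightarrow> 'e::ab_group_add \<Rightarrow> 'e) \<Rightarrow> 'e set \<Rightarrow> ('e \<Rightarrow> real) \<Rightarrow> 'e set \<Rightarrow> bool" where
  "max_orthogonal sc E N X \<longleftrightarrow> na_orthogonal sc E N X \<and>
     (\<forall>Y. na_orthogonal sc E N Y \<and> X \<subseteq> Y \<longrightarrow> Y = X)"

definition orth_dim ::
  "('a::field \<Rightarrow> 'e::ab_group_add \<Rightarrow> 'e) \<Rightarrow> 'e set \<Rightarrow> ('e \<Rightarrow> real) \<Rightarrow> nat" where
  "orth_dim sc E N = card (SOME X. max_orthogonal sc E N X)"

definition span1x :: "('a::field \<Rightarrow> 'b::field) \<Rightarrow> 'b \<Rightarrow> 'b set" where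
  "span1x \<iota> x = {\<iota> a + \<iota> c * x | a c. True}"

definition dist_to_K :: "('b::field \<Rightarrow> real) \<Rightarrow> ('a::field \<Rightarrow> 'b) \<Rightarrow> 'b \<Rightarrow> real" where
  "dist_to_K bv \<iota> x = Inf {bv (x - \<iota> a) | a. True}"

definition iso_span1x ::
  "('b::field \<Rightarrow> real) \<Rightarrow> ('a::field \<Rightarrow> 'b) \<Rightarrow> ('a \<Rightarrow> 'e::ab_group_add \<Rightarrow> 'e) \<Rightarrow> 'e set
     \<Rightarrow> ('e \<Rightarrow> real) \<Rightarrow> 'b \<Rightarrow> real \<Rightarrow> bool" where
  "iso_span1x bv \<iota> sc F N x t \<longleftrightarrow> (\<exists>T. bij_betw T F (span1x \<iota> x)
     \<and> (\<forall>f\<in>F. \<forall>g\<in>F. T (f + g) = T f + T g)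
     \<and> (\<forall>c. \<forall>f\<in>F. T (sc c f) = \<iota> c * T f)
     \<and> (\<forall>f\<in>F. t * bv (T f) = N f))"

end

theory Submission
  imports Defs
begin

text \<open>Using (SE) for a hyperplane \<open>H \<supseteq> D\<close>, everything reduces to extending a norm-one
  functional \<open>f\<^sub>1\<close> from \<open>H\<close> to \<open>E = H \<oplus> K b\<close>. All candidate extensions lie in the plane
  \<open>F \<subseteq> E'\<close> spanned by \<open>f\<^sub>1 \<circ> \<pi>\<close> and the \<open>b\<close>-coordinate, and the question becomes whether,
  for \<open>W = \<inter> ker F\<close> and every \<open>v\<close>, the norm-one functionals on \<open>W + K v\<close> vanishing on \<open>W\<close>
  extend into \<open>F\<close> with norm one; conversely (SE) forces exactly this for every plane \<open>F\<close>.

  If \<open>F\<close> has an orthogonal basis, the quotient norm of \<open>E / W\<close> is attained by a basis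
  element, so the extension always exists. Otherwise a norm-one extension would produce an
  orthogonal pair, so extensions exist iff no quotient norm \<open>\<parallel>v + W\<parallel>\<close> lies in \<open>V\<^sub>K\<close>.
  Near-best approximations of \<open>g\<^sub>2\<close> on the line \<open>K g\<^sub>1\<close> are then centres of nested balls in
  \<open>K\<^sup>\<or>\<close>; a common point \<open>x\<close> gives \<open>F \<cong> ([1,x], |\<cdot>|\<^sub>t)\<close> with
  \<open>\<parallel>v + W\<parallel> \<cdot> t \<cdot> d(x,K) \<in> V\<^sub>K\<close> for all \<open>v\<close>, so this happens iff \<open>t \<cdot> d(x,K) \<notin> V\<^sub>K\<close>.\<close>

section \<open>Ultrametric absolute values\<close>

context
  fixes v :: "'a::field \<Rightarrow> real"
  assumes na: "nonarch_abs v"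
begin

lemma va_nonneg[simp]: "0 \<le> v x" using na unfolding nonarch_abs_def by auto
lemma va_zero_iff[simp]: "v x = 0 \<longleftrightarrow> x = 0" using na unfolding nonarch_abs_def by auto
lemma va_mult: "v (x * y) = v x * v y" using na unfolding nonarch_abs_def by auto
lemma va_add: "v (x + y) \<le> max (v x) (v y)" using na unfolding nonarch_abs_def by auto
lemma va_0[simp]: "v 0 = 0" by simp
lemma va_pos: "x \<noteq> 0 \<Longrightarrow> 0 < v x" using va_nonneg[of x] va_zero_iff[of x] by linarith

lemma va_1[simp]: "v 1 = 1"
proof -
  have "v 1 = v 1 * v 1" using va_mult[of 1 1] by simp
  moreover have "v 1 \<noteq> 0" by simp
  ultimately show ?thesis by (metis mult_cancel_right1)
qed

lemma va_minus1[simp]: "v (-1) = 1"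
proof -
  have "v (-1) * v (-1) = 1" using va_mult[of "-1" "-1"] by simp
  then have "(v (-1) - 1) * (v (-1) + 1) = 0" by (simp add: algebra_simps)
  then show ?thesis using va_nonneg[of "-1"] by auto
qed

lemma va_uminus[simp]: "v (- x) = v x"
  using va_mult[of "-1" x] by simp

lemma va_commute: "v (x - y) = v (y - x)"
  by (metis minus_diff_eq va_uminus)

lemma va_inverse: "v (inverse x) = inverse (v x)"
proof (cases "x = 0")
  case False
  then have "v (inverse x) * v x = 1" using va_mult[of "inverse x" x] by simp
  then show ?thesis by (metis inverse_unique mult.commute)
qed simp

lemma va_divide: "v (x / y) = v x / v y"
  by (simp add: divide_inverse va_mult va_inverse)

lemma va_diff: "v (x - y) \<le> max (v x) (v y)"
  using va_add[of x "-y"] by simp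

lemma va_strict: "v y < v x \<Longrightarrow> v (x + y) = v x"
proof -
  assume a: "v y < v x"
  have "v (x + y) \<le> v x" using va_add[of x y] a by simp
  moreover have "v x \<le> max (v (x + y)) (v y)" using va_add[of "x + y" "-y"] by simp
  ultimately show ?thesis using a by linarith
qed

end

lemma value_group_mult:
  assumes "nonarch_abs v" "a \<in> value_group v" "b \<in> value_group v"
  shows "a * b \<in> value_group v"
proof -
  obtain x y where "a = v x" "x \<noteq> 0" "b = v y" "y \<noteq> 0" using assms unfolding value_group_def by auto
  then show ?thesis unfolding value_group_def using va_mult[OF assms(1), of x y]
    by (auto intro!: exI[of _ "x*y"])
qed

lemma value_group_inverse:
  assumes "nonarch_abs v" "a \<in> value_group v"
  shows "inverse a \<in> value_group v"
proof -
  obtain x where "a = v x" "x \<noteq> 0" using assms unfolding value_group_def by auto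
  then show ?thesis unfolding value_group_def using va_inverse[OF assms(1), of x]
    by (auto intro!: exI[of _ "inverse x"])
qed

lemma value_group_divide:
  assumes "nonarch_abs v" "a \<in> value_group v" "b \<in> value_group v"
  shows "a / b \<in> value_group v"
  using value_group_mult[OF assms(1,2) value_group_inverse[OF assms(1,3)]] by (simp add: divide_inverse)

lemma ultrametric_Cauchy:
  fixes d :: "nat \<Rightarrow> nat \<Rightarrow> real" and r :: "nat \<Rightarrow> real"
  assumes "0 < c" and d: "\<And>m k. c * d m k \<le> max (r m) (r k)"
    and r: "\<And>k. r k < inverse (real (Suc k))"
  shows "\<forall>e>0. \<exists>M. \<forall>m\<ge>M. \<forall>k\<ge>M. d m k < e"
proof (intro allI impI)
  fix e :: real assume "e > 0"
  then have "0 < e * c" using \<open>0 < c\<close> by simp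
  then obtain M where M: "inverse (real (Suc M)) < e * c" using reals_Archimedean by blast
  have "d m k < e" if "M \<le> m" "M \<le> k" for m k
  proof -
    have "inverse (real (Suc m)) \<le> inverse (real (Suc M))" "inverse (real (Suc k)) \<le> inverse (real (Suc M))"
      using that by (simp_all add: field_simps)
    then have "c * d m k < e * c" using d[of m k] r[of m] r[of k] M by linarith
    then show ?thesis using \<open>0 < c\<close> by (simp add: mult.commute)
  qed
  then show "\<exists>M. \<forall>m\<ge>M. \<forall>k\<ge>M. d m k < e" by blast
qed

lemma vector_space_dscale: "vector_space (dscale :: 'a::field \<Rightarrow> ('e \<Rightarrow> 'a) \<Rightarrow> ('e \<Rightarrow> 'a))"
  unfolding vector_space_def dscale_def by (auto simp: fun_eq_iff algebra_simps)

lemma dscale_apply[simp]: "dscale c g x = c * g x" unfolding dscale_def by simp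

section \<open>Finite-dimensional normed spaces over a complete field\<close>

locale na_space = vector_space sc
  for sc :: "'a::field \<Rightarrow> 'e::ab_group_add \<Rightarrow> 'e" +
  fixes av :: "'a \<Rightarrow> real" and E :: "'e set" and N :: "'e \<Rightarrow> real"
  assumes av: "nonarch_abs av" and compl: "abs_complete av"
    and nns: "na_normed_space av sc E N" and fdim: "fin_dim sc E"
begin

lemmas av_simps[simp] = va_0[OF av] va_1[OF av] va_uminus[OF av] va_minus1[OF av]
  va_nonneg[OF av] va_zero_iff[OF av]
lemmas av_mult = va_mult[OF av]

lemma E_subspace: "subspace E" using nns unfolding na_normed_space_def by auto
lemma N_nonneg: "x \<in> E \<Longrightarrow> 0 \<le> N x" using nns unfolding na_normed_space_def by auto
lemma N_zero_iff: "x \<in> E \<Longrightarrow> N x = 0 \<longleftrightarrow> x = 0" using nns unfolding na_normed_space_def by auto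
lemma N_pos: "x \<in> E \<Longrightarrow> x \<noteq> 0 \<Longrightarrow> 0 < N x" using N_nonneg N_zero_iff by force
lemma N_scale: "x \<in> E \<Longrightarrow> N (sc c x) = av c * N x" using nns unfolding na_normed_space_def by auto
lemma N_add: "x \<in> E \<Longrightarrow> y \<in> E \<Longrightarrow> N (x + y) \<le> max (N x) (N y)"
  using nns unfolding na_normed_space_def by auto

lemma E_add: "x \<in> E \<Longrightarrow> y \<in> E \<Longrightarrow> x + y \<in> E" using subspace_add[OF E_subspace] .
lemma E_diff: "x \<in> E \<Longrightarrow> y \<in> E \<Longrightarrow> x - y \<in> E" using subspace_diff[OF E_subspace] .
lemma E_scale: "x \<in> E \<Longrightarrow> sc c x \<in> E" using subspace_scale[OF E_subspace] .
lemma E_0: "0 \<in> E" using subspace_0[OF E_subspace] .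
lemma N_0[simp]: "N 0 = 0" using N_zero_iff E_0 by auto

lemma N_uminus: "x \<in> E \<Longrightarrow> N (- x) = N x"
  using N_scale[of x "-1"] by (simp add: scale_minus_left)

lemma N_diff: "x \<in> E \<Longrightarrow> y \<in> E \<Longrightarrow> N (x - y) \<le> max (N x) (N y)"
  using N_add[of x "-y"] N_uminus[of y] subspace_neg[OF E_subspace, of y] by simp

lemma N_strict: "x \<in> E \<Longrightarrow> y \<in> E \<Longrightarrow> N y < N x \<Longrightarrow> N (x + y) = N x"
proof -
  assume a: "x \<in> E" "y \<in> E" "N y < N x"
  have "N (x + y) \<le> N x" using N_add[OF a(1,2)] a(3) by simp
  moreover have "N x \<le> max (N (x + y)) (N y)"
    using N_diff[OF E_add[OF a(1,2)] a(2)] by simp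
  ultimately show ?thesis using a by linarith
qed

lemma span_E: "S \<subseteq> E \<Longrightarrow> span S \<subseteq> E"
  using span_minimal[OF _ E_subspace] .

lemma fin_basis: obtains B where "finite B" "B \<subseteq> E" "span B = E"
  using fdim unfolding fin_dim_def by blast

lemma subspace_finite_basis:
  assumes "subspace X" "X \<subseteq> E"
  obtains S where "finite S" "S \<subseteq> X" "independent S" "span S = X"
proof -
  obtain B0 where B0: "finite B0" "B0 \<subseteq> E" "span B0 = E" using fin_basis by blast
  obtain B where B: "B \<subseteq> X" "independent B" "X \<subseteq> span B" "card B = dim X" using basis_exists by blast
  have "finite B" using independent_span_bound[OF B0(1) B(2)] B(1) assms(2) B0(3) by auto
  moreover have "span B = X" using B span_minimal[OF B(1) assms(1)] by auto
  ultimately show ?thesis using that B by blast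
qed

subsection \<open>Finite-dimensional subspaces are closed\<close>

definition dist_sep :: "'e set \<Rightarrow> bool" where
  "dist_sep X \<longleftrightarrow> (\<forall>v\<in>E. v \<notin> X \<longrightarrow> (\<exists>c>0. \<forall>y\<in>X. c \<le> N (v - y)))"

lemma dist_sep_line_lower:
  assumes X: "subspace X" "X \<subseteq> E" and u: "u \<in> E" and cu: "\<forall>z\<in>X. c \<le> N (u - z)"
    and z: "z \<in> X"
  shows "av l * c \<le> N (sc l u + z)"
proof (cases "l = 0")
  case True
  then show ?thesis using N_nonneg[of z] X z by auto
next
  case False
  define z' where "z' = - sc (inverse l) z"
  have z'X: "z' \<in> X" unfolding z'_def using subspace_scale[OF X(1) z] subspace_neg[OF X(1)] by blast
  have "sc l u + z = sc l (u - z')"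
    using False by (simp add: z'_def scale_right_distrib)
  moreover have "u - z' \<in> E" using E_diff[OF u] X(2) z'X by auto
  ultimately have "N (sc l u + z) = av l * N (u - z')" using N_scale by simp
  then show ?thesis using bspec[OF cu z'X] by (simp add: mult_left_mono)
qed

text \<open>If \<open>\<lambda>\<^sub>k u + z\<^sub>k \<rightarrow> v\<close>, the lower bound on \<open>N (\<lambda> u + z)\<close> makes \<open>\<lambda>\<^sub>k\<close> Cauchy;
  its limit \<open>l\<close> then puts \<open>v - l u\<close> at distance zero from \<open>X\<close>.\<close>
lemma dist_sep_coeff_Cauchy:
  assumes X: "subspace X" "X \<subseteq> E" and u: "u \<in> E" and cu: "0 < cu" "\<forall>z\<in>X. cu \<le> N (u - z)"
    and v: "v \<in> E" and z: "\<And>k. z k \<in> X"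
    and approx: "\<And>k. N (v - (sc (lam k) u + z k)) < inverse (real (Suc k))"
  shows "\<forall>e>0. \<exists>M. \<forall>m\<ge>M. \<forall>k\<ge>M. av (lam m - lam k) < e"
proof -
  have yE: "sc (lam k) u + z k \<in> E" for k using z X(2) E_add E_scale u by blast
  have "cu * av (lam m - lam k) \<le> max (N (v - (sc (lam m) u + z m))) (N (v - (sc (lam k) u + z k)))" for m k
  proof -
    have "cu * av (lam m - lam k) \<le> N (sc (lam m - lam k) u + (z m - z k))"
      using dist_sep_line_lower[OF X u cu(2) subspace_diff[OF X(1) z z]] by (simp add: mult.commute)
    also have "sc (lam m - lam k) u + (z m - z k) = (v - (sc (lam k) u + z k)) - (v - (sc (lam m) u + z m))"
      by (simp add: scale_left_diff_distrib algebra_simps)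
    also have "N \<dots> \<le> max (N (v - (sc (lam m) u + z m))) (N (v - (sc (lam k) u + z k)))"
      using N_diff E_diff v yE by (metis max.commute)
    finally show ?thesis .
  qed
  from ultrametric_Cauchy[OF cu(1) this approx] show ?thesis .
qed

lemma dist_sep_limit:
  assumes X: "subspace X" "X \<subseteq> E" "dist_sep X" and u: "u \<in> E" and v: "v \<in> E" and z: "\<And>k. z k \<in> X"
    and approx: "\<And>k. N (v - (sc (lam k) u + z k)) < inverse (real (Suc k))"
    and l: "\<And>e. e > 0 \<Longrightarrow> \<exists>M. \<forall>k\<ge>M. av (lam k - l) < e"
  shows "v - sc l u \<in> X"
proof (rule ccontr)
  assume "v - sc l u \<notin> X"
  then obtain c where c: "c > 0" "\<And>z. z \<in> X \<Longrightarrow> c \<le> N (v - sc l u - z)"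
    using X(3) v E_diff E_scale u unfolding dist_sep_def by blast
  obtain M1 where M1: "inverse (real (Suc M1)) < c" using reals_Archimedean c by blast
  have "c / (N u + 1) > 0" using c N_nonneg[OF u] by simp
  then obtain M2 where M2: "\<And>k. k \<ge> M2 \<Longrightarrow> av (lam k - l) < c / (N u + 1)" using l by blast
  define k where "k = max M1 M2"
  have eq: "v - sc l u - z k = (v - (sc (lam k) u + z k)) + sc (lam k - l) u"
    by (simp add: scale_left_diff_distrib algebra_simps)
  have "inverse (real (Suc k)) \<le> inverse (real (Suc M1))" unfolding k_def by (simp add: field_simps)
  then have "N (v - (sc (lam k) u + z k)) < c" using approx[of k] M1 by linarith
  moreover have "N (sc (lam k - l) u) < c"
  proof -
    have "N (sc (lam k - l) u) = av (lam k - l) * N u" using N_scale u by simp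
    also have "\<dots> \<le> c / (N u + 1) * N u"
      using M2[of k] N_nonneg[OF u] by (intro mult_right_mono) (auto simp: k_def)
    also have "\<dots> < c" using c N_nonneg[OF u] by (simp add: field_simps)
    finally show ?thesis .
  qed
  moreover have "N (v - sc l u - z k) \<le> max (N (v - (sc (lam k) u + z k))) (N (sc (lam k - l) u))"
    unfolding eq using z X(2) u v by (intro N_add E_diff E_add E_scale) auto
  ultimately have "N (v - sc l u - z k) < c" by linarith
  then show False using c(2)[OF z[of k]] by simp
qed

lemma dist_sep_insert:
  assumes X: "subspace X" "X \<subseteq> E" "dist_sep X" and u: "u \<in> E" "u \<notin> X"
  shows "dist_sep {sc k u + z | k z. z \<in> X}"
  unfolding dist_sep_def
proof (intro ballI impI)
  define Y where "Y = {sc k u + z | k z. z \<in> X}"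
  fix v assume v: "v \<in> E" "v \<notin> Y"
  obtain cu where cu: "cu > 0" "\<forall>z\<in>X. cu \<le> N (u - z)"
    using X(3) u unfolding dist_sep_def by blast
  show "\<exists>c>0. \<forall>y\<in>Y. c \<le> N (v - y)"
  proof (rule ccontr)
    assume nc: "\<not> ?thesis"
    have "\<exists>p. snd p \<in> X \<and> N (v - (sc (fst p) u + snd p)) < inverse (real (Suc k))" for k
    proof -
      have "inverse (real (Suc k)) > 0" by simp
      then obtain y where "y \<in> Y" "N (v - y) < inverse (real (Suc k))" using nc by (meson not_le)
      then obtain a z where "y = sc a u + z" "z \<in> X" "N (v - y) < inverse (real (Suc k))"
        unfolding Y_def by blast
      then show ?thesis by (intro exI[of _ "(a, z)"]) simp
    qed
    then have "\<forall>k. \<exists>p. snd p \<in> X \<and> N (v - (sc (fst p) u + snd p)) < inverse (real (Suc k))" by blast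
    from choice[OF this] obtain p
      where p: "\<forall>k. snd (p k) \<in> X \<and> N (v - (sc (fst (p k)) u + snd (p k))) < inverse (real (Suc k))"
      by blast
    define lam z where "lam k = fst (p k)" and "z k = snd (p k)" for k
    have yk: "z k \<in> X" "N (v - (sc (lam k) u + z k)) < inverse (real (Suc k))" for k
      using p unfolding lam_def z_def by auto
    have "\<forall>e>0. \<exists>M. \<forall>m\<ge>M. \<forall>k\<ge>M. av (lam m - lam k) < e"
      by (rule dist_sep_coeff_Cauchy[OF X(1,2) u(1) cu v(1) yk])
    then obtain l where "\<And>e. e > 0 \<Longrightarrow> \<exists>M. \<forall>k\<ge>M. av (lam k - l) < e"
      using compl[unfolded abs_complete_def, rule_format] by blast
    then have "v - sc l u \<in> X" by (rule dist_sep_limit[OF X u(1) v(1) yk])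
    then have "v \<in> Y" unfolding Y_def by (auto intro!: exI[of _ l] exI[of _ "v - sc l u"])
    then show False using v by blast
  qed
qed

lemma dist_sep_span: "finite S \<Longrightarrow> S \<subseteq> E \<Longrightarrow> dist_sep (span S)"
proof (induction S rule: finite_induct)
  case empty
  show ?case unfolding dist_sep_def
  proof (intro ballI impI)
    fix v assume "v \<in> E" "v \<notin> span {}"
    then show "\<exists>c>0. \<forall>y\<in>span {}. c \<le> N (v - y)" using N_pos[of v] by (auto intro!: exI[of _ "N v"])
  qed
next
  case (insert u S)
  show ?case
  proof (cases "u \<in> span S")
    case True
    then show ?thesis using insert.IH insert.prems span_redundant[OF True] by simp
  next
    case False
    have "x \<in> span (insert u S) \<longleftrightarrow> (\<exists>k z. x = sc k u + z \<and> z \<in> span S)" for x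
    proof
      assume "x \<in> span (insert u S)"
      then obtain k where "x - sc k u \<in> span S" using span_breakdown_eq by blast
      then show "\<exists>k z. x = sc k u + z \<and> z \<in> span S" by (intro exI[of _ k] exI[of _ "x - sc k u"]) simp
    next
      assume "\<exists>k z. x = sc k u + z \<and> z \<in> span S"
      then obtain k z where "x = sc k u + z" "z \<in> span S" by blast
      then have "x - sc k u \<in> span S" by simp
      then show "x \<in> span (insert u S)" using span_breakdown_eq by blast
    qed
    then have "span (insert u S) = {sc k u + z | k z. z \<in> span S}" by blast
    then show ?thesis using dist_sep_insert[of "span S" u] insert False span_E by auto
  qed
qed

lemma subspace_dist_pos:
  assumes "subspace X" "X \<subseteq> E" "v \<in> E" "v \<notin> X"
  shows "\<exists>c>0. \<forall>y\<in>X. c \<le> N (v - y)"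
proof -
  obtain S where "finite S" "S \<subseteq> X" "independent S" "span S = X"
    by (rule subspace_finite_basis[OF assms(1,2)])
  then have "dist_sep X" using dist_sep_span[of S] assms(2) by simp
  then show ?thesis using assms(3,4) unfolding dist_sep_def by blast
qed

end

context na_space
begin

lemma dual_0: "subspace X \<Longrightarrow> f \<in> dual sc X \<Longrightarrow> f 0 = 0"
proof -
  assume "subspace X" "f \<in> dual sc X"
  then have "f (sc 0 0) = 0 * f 0" unfolding dual_def using subspace_0[of X] by blast
  then show "f 0 = 0" by simp
qed

lemma dual_scale: "f \<in> dual sc X \<Longrightarrow> x \<in> X \<Longrightarrow> f (sc c x) = c * f x"
  unfolding dual_def by auto
lemma dual_add: "f \<in> dual sc X \<Longrightarrow> x \<in> X \<Longrightarrow> y \<in> X \<Longrightarrow> f (x + y) = f x + f y"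
  unfolding dual_def by auto
lemma dual_uminus: "subspace X \<Longrightarrow> f \<in> dual sc X \<Longrightarrow> x \<in> X \<Longrightarrow> f (- x) = - f x"
  using dual_scale[of f X x "-1"] by (simp add: scale_minus_left)
lemma dual_diff: "subspace X \<Longrightarrow> f \<in> dual sc X \<Longrightarrow> x \<in> X \<Longrightarrow> y \<in> X \<Longrightarrow> f (x - y) = f x - f y"
  using dual_add[of f X x "-y"] dual_uminus[of X f y] subspace_neg[of X y] by simp

lemma dual_lin2: "f \<in> dual sc X \<Longrightarrow> subspace X \<Longrightarrow> x \<in> X \<Longrightarrow> y \<in> X \<Longrightarrow>
   f (sc a x - sc b y) = a * f x - b * f y"
  using dual_diff[of X f "sc a x" "sc b y"] subspace_scale[of X] dual_scale[of f X] by simp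

lemma dual_dscale: "g \<in> dual sc X \<Longrightarrow> dscale c g \<in> dual sc X"
  unfolding dual_def dscale_def by (auto simp: algebra_simps)
lemma dual_plus: "g \<in> dual sc X \<Longrightarrow> h \<in> dual sc X \<Longrightarrow> g + h \<in> dual sc X"
  unfolding dual_def by (auto simp: algebra_simps)
lemma dual_zero: "0 \<in> dual sc X"
  unfolding dual_def by auto
lemma dual_minus: "g \<in> dual sc X \<Longrightarrow> h \<in> dual sc X \<Longrightarrow> g - h \<in> dual sc X"
  unfolding dual_def by (auto simp: algebra_simps)
lemma dual_neg: "g \<in> dual sc X \<Longrightarrow> - g \<in> dual sc X"
  using dual_minus[OF dual_zero] by (metis diff_0)

lemma dual_eqI: "g \<in> dual sc X \<Longrightarrow> h \<in> dual sc X \<Longrightarrow> (\<And>x. x \<in> X \<Longrightarrow> g x = h x) \<Longrightarrow> g = h"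
  by (rule ext, rename_tac x, case_tac "x \<in> X") (auto simp: dual_def)

text \<open>Continuity of functionals is automatic: the kernel of \<open>f\<close> has positive distance
  from any vector \<open>v\<close> with \<open>f v = 1\<close>.\<close>
lemma dual_bounded:
  assumes X: "subspace X" "X \<subseteq> E" and f: "f \<in> dual sc X"
  shows "\<exists>C\<ge>0. \<forall>x\<in>X. av (f x) \<le> C * N x"
proof (cases "\<forall>x\<in>X. f x = 0")
  case True
  then show ?thesis by (auto intro!: exI[of _ 0])
next
  case False
  then obtain x0 where x0: "x0 \<in> X" "f x0 \<noteq> 0" by auto
  define v where "v = sc (inverse (f x0)) x0"
  have vX: "v \<in> X" unfolding v_def using subspace_scale[OF X(1) x0(1)] .
  have fv: "f v = 1" unfolding v_def using dual_scale[OF f x0(1)] x0(2) by simp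
  define K0 where "K0 = {x\<in>X. f x = 0}"
  have K0: "subspace K0"
    unfolding K0_def subspace_def using subspace_0[OF X(1)] dual_0[OF X(1) f]
      subspace_add[OF X(1)] subspace_scale[OF X(1)] dual_add[OF f] dual_scale[OF f] by auto
  have "K0 \<subseteq> E" "v \<in> E" "v \<notin> K0" using X fv vX unfolding K0_def by auto
  from subspace_dist_pos[OF K0 this] obtain c where c: "c > 0" "\<And>y. y \<in> K0 \<Longrightarrow> c \<le> N (v - y)"
    by blast
  have "av (f x) \<le> inverse c * N x" if xX: "x \<in> X" for x
  proof (cases "f x = 0")
    case True then show ?thesis using N_nonneg xX X c by auto
  next
    case False
    define y where "y = v - sc (inverse (f x)) x"
    have yX: "y \<in> X" unfolding y_def using vX xX X(1) subspace_diff subspace_scale by blast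
    have "f y = 0" unfolding y_def using dual_diff[OF X(1) f vX] subspace_scale[OF X(1) xX]
        dual_scale[OF f xX] fv False by simp
    then have "y \<in> K0" using yX K0_def by auto
    have "x = sc (f x) (v - y)" unfolding y_def using False by simp
    then have "N x = av (f x) * N (v - y)"
      using N_scale[of "v - y" "f x"] vX yX X(2) E_diff by auto
    then have "av (f x) * c \<le> N x" using c(2)[OF \<open>y \<in> K0\<close>] by (simp add: mult_left_mono)
    then show ?thesis using c by (simp add: field_simps)
  qed
  then show ?thesis using c by (intro exI[of _ "inverse c"]) auto
qed

lemma opnorm_set_bdd:
  assumes X: "subspace X" "X \<subseteq> E" and f: "f \<in> dual sc X"
  shows "bdd_above ({av (f x) / N x | x. x \<in> X \<and> x \<noteq> 0} \<union> {0})"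
proof -
  obtain C where C: "C \<ge> 0" "\<And>x. x \<in> X \<Longrightarrow> av (f x) \<le> C * N x" using dual_bounded[OF X f] by blast
  have "av (f x) / N x \<le> C" if "x \<in> X" "x \<noteq> 0" for x
  proof -
    have "0 < N x" using N_pos that X by auto
    then show ?thesis using C(2)[OF that(1)] by (simp add: divide_le_eq)
  qed
  then show ?thesis using C(1) by (auto intro!: bdd_aboveI[of _ C])
qed

lemma opnorm_nonneg:
  assumes "subspace X" "X \<subseteq> E" "f \<in> dual sc X"
  shows "0 \<le> opnorm av X N f"
  unfolding opnorm_def by (rule cSup_upper[OF _ opnorm_set_bdd[OF assms]]) simp

lemma opnorm_bound:
  assumes X: "subspace X" "X \<subseteq> E" and f: "f \<in> dual sc X" and x: "x \<in> X"
  shows "av (f x) \<le> opnorm av X N f * N x"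
proof (cases "x = 0")
  case True then show ?thesis using dual_0[OF X(1) f] by simp
next
  case False
  then have Np: "N x > 0" using N_pos X x by auto
  have "av (f x) / N x \<le> opnorm av X N f" unfolding opnorm_def
    by (rule cSup_upper[OF _ opnorm_set_bdd[OF X f]]) (use x False in auto)
  then show ?thesis using Np by (simp add: divide_le_eq)
qed

lemma opnorm_least:
  assumes X: "subspace X" "X \<subseteq> E" and f: "f \<in> dual sc X"
    and "0 \<le> C" and C: "\<And>x. x \<in> X \<Longrightarrow> av (f x) \<le> C * N x"
  shows "opnorm av X N f \<le> C"
  unfolding opnorm_def
proof (rule cSup_least)
  fix s assume "s \<in> {av (f x) / N x | x. x \<in> X \<and> x \<noteq> 0} \<union> {0}"
  then consider "s = 0" | x where "x \<in> X" "x \<noteq> 0" "s = av (f x) / N x" by auto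
  then show "s \<le> C"
  proof cases
    case 2
    then have "N x > 0" using N_pos X by auto
    then show ?thesis using C[OF 2(1)] 2(3) by (simp add: divide_le_eq)
  qed (use \<open>0 \<le> C\<close> in simp)
qed simp

definition restr :: "'e set \<Rightarrow> ('e \<Rightarrow> 'a) \<Rightarrow> ('e \<Rightarrow> 'a)" where
  "restr Y g = (\<lambda>x. if x \<in> Y then g x else 0)"

lemma restr_dual: "Y \<subseteq> X \<Longrightarrow> subspace Y \<Longrightarrow> g \<in> dual sc X \<Longrightarrow> restr Y g \<in> dual sc Y"
  unfolding dual_def restr_def by (auto simp: subspace_add subspace_scale subset_iff)

lemma opnorm_restr_le:
  assumes "subspace Y" "subspace X" "Y \<subseteq> X" "X \<subseteq> E" "g \<in> dual sc X"
  shows "opnorm av Y N (restr Y g) \<le> opnorm av X N g"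
  using assms opnorm_nonneg[OF assms(2,4,5)] opnorm_bound[OF assms(2,4,5)]
  by (intro opnorm_least[OF assms(1) _ restr_dual[OF assms(3,1,5)]]) (auto simp: restr_def)

lemma opnorm_ext_ge:
  assumes "subspace Y" "subspace X" "Y \<subseteq> X" "X \<subseteq> E" "g \<in> dual sc X" "f \<in> dual sc Y"
    and "\<And>x. x \<in> Y \<Longrightarrow> g x = f x"
  shows "opnorm av Y N f \<le> opnorm av X N g"
proof -
  have "restr Y g = f" using assms(6,7) unfolding restr_def dual_def by (auto simp: fun_eq_iff)
  then show ?thesis using opnorm_restr_le[OF assms(1-5)] by simp
qed

lemma SE_subspace:
  assumes se: "SE av sc E N" and D: "subspace D" "D \<subseteq> E"
  shows "SE av sc D N"
  unfolding SE_def
proof (intro allI impI)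
  fix D1 f assume a: "subspace D1 \<and> D1 \<subseteq> D \<and> f \<in> dual sc D1 \<and> opnorm av D1 N f = 1"
  moreover have "D1 \<subseteq> E" using a D by blast
  ultimately obtain g where g: "g \<in> dual sc E" "\<And>x. x \<in> D1 \<Longrightarrow> g x = f x" "opnorm av E N g = 1"
    using se unfolding SE_def by blast
  have gD: "restr D g \<in> dual sc D" using restr_dual[OF D(2,1) g(1)] .
  have ext: "\<And>x. x \<in> D1 \<Longrightarrow> restr D g x = f x" unfolding restr_def using a g(2) by auto
  have "opnorm av D N (restr D g) \<le> 1"
    using opnorm_restr_le[OF D(1) E_subspace D(2) subset_refl g(1)] g(3) by simp
  moreover have "1 \<le> opnorm av D N (restr D g)"
    using opnorm_ext_ge[of D1 D "restr D g" f] a D gD ext by auto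
  ultimately have "opnorm av D N (restr D g) = 1" by linarith
  then show "\<exists>g\<in>dual sc D. (\<forall>x\<in>D1. g x = f x) \<and> opnorm av D N g = 1" using gD ext by blast
qed

end

context na_space
begin

sublocale dv: vector_space "dscale :: 'a \<Rightarrow> ('e \<Rightarrow> 'a) \<Rightarrow> ('e \<Rightarrow> 'a)"
  by (rule vector_space_dscale)

abbreviation nrm :: "('e \<Rightarrow> 'a) \<Rightarrow> real" where "nrm g \<equiv> opnorm av E N g"

lemma nrm_nonneg: "g \<in> dual sc E \<Longrightarrow> 0 \<le> nrm g"
  using opnorm_nonneg[OF E_subspace subset_refl] .
lemma nrm_bound: "g \<in> dual sc E \<Longrightarrow> x \<in> E \<Longrightarrow> av (g x) \<le> nrm g * N x"
  using opnorm_bound[OF E_subspace subset_refl] .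
lemma nrm_least: "g \<in> dual sc E \<Longrightarrow> 0 \<le> C \<Longrightarrow> (\<And>x. x \<in> E \<Longrightarrow> av (g x) \<le> C * N x) \<Longrightarrow> nrm g \<le> C"
  using opnorm_least[OF E_subspace subset_refl] .

lemma nrm_dscale: assumes "g \<in> dual sc E" shows "nrm (dscale c g) = av c * nrm g"
proof (cases "c = 0")
  case True
  then show ?thesis using nrm_least[OF dual_zero, of 0] nrm_nonneg[OF dual_zero] by simp
next
  case False
  have le: "nrm (dscale c h) \<le> av c * nrm h" if h: "h \<in> dual sc E" for c h
    by (rule nrm_least[OF dual_dscale[OF h]])
       (use nrm_nonneg[OF h] nrm_bound[OF h] in \<open>auto simp: av_mult mult.assoc intro: mult_left_mono\<close>)
  have "nrm g = nrm (dscale (inverse c) (dscale c g))" using False by (simp add: dscale_def field_simps)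
  also have "\<dots> \<le> av (inverse c) * nrm (dscale c g)" using le[OF dual_dscale[OF assms]] .
  finally have "av c * nrm g \<le> nrm (dscale c g)"
    using False va_pos[OF av False] by (simp add: va_divide[OF av] field_simps)
  then show ?thesis using le[OF assms, of c] by simp
qed

lemma nrm_add: assumes "g \<in> dual sc E" "h \<in> dual sc E" shows "nrm (g + h) \<le> max (nrm g) (nrm h)"
proof (rule nrm_least[OF dual_plus[OF assms]])
  show "0 \<le> max (nrm g) (nrm h)" using nrm_nonneg[OF assms(1)] by simp
  fix x assume x: "x \<in> E"
  have "av ((g + h) x) \<le> max (av (g x)) (av (h x))" using va_add[OF av] by simp
  also have "\<dots> \<le> max (nrm g * N x) (nrm h * N x)" using nrm_bound assms x by (meson max.mono)
  also have "\<dots> = max (nrm g) (nrm h) * N x" using N_nonneg[OF x] by (simp add: max_mult_distrib_right)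
  finally show "av ((g + h) x) \<le> max (nrm g) (nrm h) * N x" .
qed

lemma nrm_zero_iff: assumes "g \<in> dual sc E" shows "nrm g = 0 \<longleftrightarrow> g = 0"
proof
  assume "nrm g = 0"
  then have "g x = 0" if "x \<in> E" for x
    using nrm_bound[OF assms that] va_nonneg[OF av, of "g x"] by (simp add: order_antisym)
  then show "g = 0" using dual_eqI[OF assms dual_zero] by auto
next
  assume "g = 0"
  then show "nrm g = 0" using nrm_nonneg[OF assms] nrm_least[OF assms, of 0] by auto
qed

lemma nrm_pos: "g \<in> dual sc E \<Longrightarrow> g \<noteq> 0 \<Longrightarrow> 0 < nrm g"
  using nrm_nonneg nrm_zero_iff by force

lemma nrm_uminus: "g \<in> dual sc E \<Longrightarrow> nrm (- g) = nrm g"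
  using nrm_dscale[of g "-1"] by (simp add: dscale_def fun_Compl_def)

lemma nrm_diff: assumes "g \<in> dual sc E" "h \<in> dual sc E" shows "nrm (g - h) \<le> max (nrm g) (nrm h)"
  using nrm_add[OF assms(1) dual_neg[OF assms(2)]] nrm_uminus[OF assms(2)] by simp

lemma nrm_strict: assumes "g \<in> dual sc E" "h \<in> dual sc E" "nrm h < nrm g" shows "nrm (g + h) = nrm g"
proof -
  have "nrm (g + h) \<le> nrm g" using nrm_add[OF assms(1,2)] assms(3) by simp
  moreover have "nrm g \<le> max (nrm (g + h)) (nrm h)"
    using nrm_diff[OF dual_plus[OF assms(1,2)] assms(2)] by simp
  ultimately show ?thesis using assms(3) by linarith
qed

lemma nrm_diff_strict: "g \<in> dual sc E \<Longrightarrow> h \<in> dual sc E \<Longrightarrow> nrm g < nrm h \<Longrightarrow> nrm (g - h) = nrm h"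
  using nrm_strict[of "- h" g] dual_neg nrm_uminus by (simp add: add.commute)

lemma nrm_zero[simp]: "nrm 0 = 0" using nrm_zero_iff[OF dual_zero] by simp

lemma dv_span_pair: "dv.span {u, w} = {dscale a u + dscale b w | a b. True}"
proof -
  have "x \<in> dv.span {u, w} \<longleftrightarrow> (\<exists>a b. x = dscale a u + dscale b w)" for x
  proof
    assume "x \<in> dv.span {u, w}"
    then obtain a c where "x - dscale a u = dscale c w" using dv.span_insert dv.span_singleton by auto
    then have "x = dscale a u + dscale c w" by (simp add: algebra_simps)
    then show "\<exists>a b. x = dscale a u + dscale b w" by blast
  next
    assume "\<exists>a b. x = dscale a u + dscale b w"
    then obtain a c where "x = dscale a u + dscale c w" by blast
    then have "x - dscale a u = dscale c w" by simp
    then show "x \<in> dv.span {u, w}" using dv.span_insert dv.span_singleton by auto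
  qed
  then show ?thesis by blast
qed

lemma dual_pair_det_nonzero:
  assumes hE: "h1 \<in> dual sc E" "h2 \<in> dual sc E" and h1nz: "h1 \<noteq> 0" and h2n: "h2 \<notin> dv.span {h1}"
  obtains x1 x2 where "x1 \<in> E" "x2 \<in> E" "h1 x1 * h2 x2 - h1 x2 * h2 x1 \<noteq> 0"
proof -
  obtain x1 where x1: "x1 \<in> E" "h1 x1 \<noteq> 0"
  proof (rule ccontr)
    assume "\<not> thesis"
    then have "h1 = 0" using that dual_eqI[OF hE(1) dual_zero] by auto
    then show False using h1nz by simp
  qed
  show ?thesis
  proof (rule ccontr)
    assume "\<not> thesis"
    then have a: "\<forall>x\<in>E. h1 x1 * h2 x = h1 x * h2 x1" using that x1(1) by force
    have "h2 = dscale (h2 x1 / h1 x1) h1"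
      by (rule dual_eqI[OF hE(2) dual_dscale[OF hE(1)]]) (use a x1(2) in \<open>simp add: field_simps\<close>)
    then show False using h2n dv.span_singleton by auto
  qed
qed

text \<open>The dual basis \<open>a\<^sub>1, a\<^sub>2\<close> comes from Cramer's rule on the matrix \<open>h\<^sub>i(x\<^sub>j)\<close>.\<close>
lemma plane_biorthogonal_basis:
  assumes Fs: "dv.subspace F" and FE: "F \<subseteq> dual sc E" and d2: "dv.dim F = 2"
  obtains g1 g2 a1 a2 where "g1 \<in> dual sc E" "g2 \<in> dual sc E" "a1 \<in> E" "a2 \<in> E"
    "g1 a1 = 1" "g1 a2 = 0" "g2 a1 = 0" "g2 a2 = 1"
    "F = {dscale a g1 + dscale b g2 | a b. True}"
proof -
  obtain B where B: "B \<subseteq> F" "dv.independent B" "F \<subseteq> dv.span B" "card B = dv.dim F"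
    using dv.basis_exists by blast
  then obtain h1 h2 where h: "B = {h1, h2}" "h1 \<noteq> h2" using d2 card_2_iff by metis
  have hE: "h1 \<in> dual sc E" "h2 \<in> dual sc E" using B(1) FE h by auto
  have "h1 \<noteq> 0" using dv.dependent_zero B(2) h by auto
  moreover have "h2 \<notin> dv.span {h1}"
  proof
    assume "h2 \<in> dv.span {h1}"
    moreover have "{h1, h2} - {h2} = {h1}" using h(2) by auto
    ultimately have "dv.dependent B" unfolding dv.dependent_def h by auto
    then show False using B(2) by simp
  qed
  ultimately obtain x1 x2 where x: "x1 \<in> E" "x2 \<in> E" "h1 x1 * h2 x2 - h1 x2 * h2 x1 \<noteq> 0"
    using dual_pair_det_nonzero[OF hE] by blast
  define det where "det = h1 x1 * h2 x2 - h1 x2 * h2 x1"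
  define a1 where "a1 = sc (h2 x2 / det) x1 - sc (h2 x1 / det) x2"
  define a2 where "a2 = sc (h1 x1 / det) x2 - sc (h1 x2 / det) x1"
  have aE: "a1 \<in> E" "a2 \<in> E" unfolding a1_def a2_def using x E_diff E_scale by auto
  have lin: "h (sc p x1 - sc r x2) = p * h x1 - r * h x2" "h (sc p x2 - sc r x1) = p * h x2 - r * h x1"
    if "h \<in> dual sc E" for h p r
    using dual_lin2[OF that E_subspace] x(1,2) by auto
  have "h1 a1 = (h1 x1 * h2 x2 - h1 x2 * h2 x1) / det" "h2 a2 = (h1 x1 * h2 x2 - h1 x2 * h2 x1) / det"
    "h2 a1 = (h2 x2 * h2 x1 - h2 x1 * h2 x2) / det" "h1 a2 = (h1 x1 * h1 x2 - h1 x2 * h1 x1) / det"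
    unfolding a1_def a2_def lin[OF hE(1)] lin[OF hE(2)] by (simp_all add: diff_divide_distrib mult.commute)
  then have "h1 a1 = 1" "h2 a1 = 0" "h1 a2 = 0" "h2 a2 = 1" using x(3) unfolding det_def by simp_all
  moreover have "dv.span B = F" using dv.span_minimal[OF B(1) Fs] B(3) by auto
  then have "F = {dscale a h1 + dscale b h2 | a b. True}" using h dv_span_pair by simp
  ultimately show ?thesis using that[OF hE aE] by blast
qed

lemma hyperplane_exists:
  assumes D: "subspace D" "D \<subseteq> E" "D \<noteq> E"
  obtains H b where "subspace H" "D \<subseteq> H" "H \<subseteq> E" "dim H + 1 = dim E" "b \<in> E" "b \<notin> H"
    "\<forall>x\<in>E. \<exists>k. x - sc k b \<in> H"
proof -
  obtain BD where BD: "finite BD" "BD \<subseteq> D" "independent BD" "span BD = D"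
    using subspace_finite_basis[OF D(1,2)] by blast
  obtain B where B: "BD \<subseteq> B" "B \<subseteq> E" "independent B" "E \<subseteq> span B"
    using maximal_independent_subset_extend[of BD E] BD D by blast
  obtain B0 where B0: "finite B0" "B0 \<subseteq> E" "span B0 = E" using fin_basis by blast
  have finB: "finite B" using independent_span_bound[OF B0(1) B(3)] B(2) B0(3) by auto
  have spanB: "span B = E" using B span_minimal[OF B(2) E_subspace] by auto
  have cardB: "card B = dim E" using basis_card_eq_dim[OF B(2,4,3)] .
  obtain b where b: "b \<in> B" "b \<notin> BD"
  proof (rule ccontr)
    assume "\<not> thesis"
    then have "B \<subseteq> BD" using that by blast
    then have "E \<subseteq> D" using spanB BD(4) span_mono by blast
    then show False using D by blast
  qed
  define H where "H = span (B - {b})"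
  have "independent (B - {b})" using independent_mono[OF B(3)] by blast
  then have "dim H = card (B - {b})" unfolding H_def using dim_span_eq_card_independent by blast
  moreover have "0 < card B" using finB b(1) card_gt_0_iff by blast
  ultimately have "dim H + 1 = dim E" using cardB finB b(1) by (simp add: card_Diff_singleton)
  moreover have "D \<subseteq> H" unfolding H_def using BD(4) span_mono[of BD "B - {b}"] B(1) b by blast
  moreover have "H \<subseteq> E" unfolding H_def using span_E B(2) by blast
  moreover have "b \<notin> H" unfolding H_def using B(3) b(1) dependent_def by blast
  moreover have "\<forall>x\<in>E. \<exists>k. x - sc k b \<in> H"
  proof
    fix x assume "x \<in> E"
    moreover have "insert b (B - {b}) = B" using b by blast
    ultimately have "x \<in> span (insert b (B - {b}))" using spanB by simp
    then show "\<exists>k. x - sc k b \<in> H" unfolding H_def using span_breakdown_eq by blast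
  qed
  ultimately show ?thesis using that[of H b] B(2) b(1) unfolding H_def by auto
qed

end

section \<open>A plane in the dual and its quotient norm\<close>

locale dual_plane = na_space +
  fixes g1 g2 and a1 a2
  assumes g1: "g1 \<in> dual sc E" and g2: "g2 \<in> dual sc E" and a1: "a1 \<in> E" and a2: "a2 \<in> E"
    and d11: "g1 a1 = 1" and d12: "g1 a2 = 0" and d21: "g2 a1 = 0" and d22: "g2 a2 = 1"
begin

definition plane where "plane = {dscale a g1 + dscale b g2 | a b. True}"
definition ker where "ker = {x\<in>E. g1 x = 0 \<and> g2 x = 0}"

text \<open>The quotient norm of \<open>E / ker\<close>, whose dual is \<open>plane\<close>.\<close>
definition qnorm where "qnorm v = Inf {N (v + w) | w. w \<in> ker}"

definition line_ker where "line_ker v = {w + sc k v | w k. w \<in> ker}"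

lemma plane_memI: "dscale a g1 + dscale b g2 \<in> plane" unfolding plane_def by blast

lemma plane_dual: "g \<in> plane \<Longrightarrow> g \<in> dual sc E"
  unfolding plane_def using dual_plus dual_dscale g1 g2 by blast

lemma plane_coord: assumes "g \<in> plane" shows "g = dscale (g a1) g1 + dscale (g a2) g2"
proof -
  obtain a b where "g = dscale a g1 + dscale b g2" using assms plane_def by blast
  then show ?thesis using d11 d12 d21 d22 by simp
qed

lemma plane_subspace: "dv.subspace plane"
  unfolding plane_def dv_span_pair[symmetric] by (rule dv.subspace_span)

lemma plane_add: "g \<in> plane \<Longrightarrow> h \<in> plane \<Longrightarrow> g + h \<in> plane"
  using plane_subspace dv.subspace_add by blast
lemma plane_scale: "g \<in> plane \<Longrightarrow> dscale c g \<in> plane"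
  using plane_subspace dv.subspace_scale by blast
lemma plane_diff: "g \<in> plane \<Longrightarrow> h \<in> plane \<Longrightarrow> g - h \<in> plane"
  using plane_subspace dv.subspace_diff by blast
lemma g1_plane: "g1 \<in> plane" using plane_memI[of 1 0] by simp
lemma g2_plane: "g2 \<in> plane" using plane_memI[of 0 1] by simp
lemma plane_comb: "dscale a g + dscale b h \<in> plane" if "g \<in> plane" "h \<in> plane"
  using plane_add plane_scale that by blast

lemma g1_ne_g2: "g1 \<noteq> g2" using d11 d21 by auto
lemma g1_nz: "g1 \<noteq> 0" using d11 by auto

lemma plane_span: "dv.span {g1, g2} = plane" using dv_span_pair plane_def by simp

lemma plane_indep: "dv.independent {g1, g2}"
proof
  assume "dv.dependent {g1, g2}"
  then consider "g1 \<in> dv.span {g2}" | "g2 \<in> dv.span {g1}"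
    unfolding dv.dependent_def using g1_ne_g2 by (auto simp: insert_Diff_if)
  then show False
  proof cases
    case 1
    then obtain k where "g1 = dscale k g2" using dv.span_singleton by auto
    then show False using d11 d21 by (metis dscale_apply mult_zero_right zero_neq_one)
  next
    case 2
    then obtain k where "g2 = dscale k g1" using dv.span_singleton by auto
    then show False using d12 d22 by (metis dscale_apply mult_zero_right zero_neq_one)
  qed
qed

lemma plane_dim: "dv.dim plane = 2"
  using dv.dim_span_eq_card_independent[OF plane_indep] plane_span g1_ne_g2 by simp

lemma ker_sub: "ker \<subseteq> E" unfolding ker_def by auto

lemma ker_subspace: "subspace ker"
  unfolding subspace_def ker_def
  using E_0 E_add E_scale dual_0[OF E_subspace g1] dual_0[OF E_subspace g2] dual_add[OF g1] dual_add[OF g2]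
    dual_scale[OF g1] dual_scale[OF g2] by auto

lemma plane_vanish: "g \<in> plane \<Longrightarrow> w \<in> ker \<Longrightarrow> g w = 0"
  using plane_coord[of g] ker_def by (metis (mono_tags, lifting) add.right_neutral dscale_apply mem_Collect_eq
      mult_zero_right plus_fun_apply)

lemma plane_eval:
  assumes "g \<in> plane" "x \<in> E" "y \<in> E"
  shows "g (x - sc b y) = g x - b * g y"
  using dual_diff[OF E_subspace plane_dual[OF assms(1)] assms(2) E_scale[OF assms(3)]]
    dual_scale[OF plane_dual[OF assms(1)] assms(3)] by simp

lemma ker_decomp: "x \<in> E \<Longrightarrow> x - sc (g1 x) a1 - sc (g2 x) a2 \<in> ker"
proof -
  assume x: "x \<in> E"
  have e: "x - sc (g1 x) a1 - sc (g2 x) a2 \<in> E" using x a1 a2 E_diff E_scale by auto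
  have "g1 (x - sc (g1 x) a1 - sc (g2 x) a2) = g1 x - g1 x * g1 a1 - g2 x * g1 a2"
    using dual_diff[OF E_subspace g1] dual_scale[OF g1] x a1 a2 E_diff E_scale by simp
  moreover have "g2 (x - sc (g1 x) a1 - sc (g2 x) a2) = g2 x - g1 x * g2 a1 - g2 x * g2 a2"
    using dual_diff[OF E_subspace g2] dual_scale[OF g2] x a1 a2 E_diff E_scale by simp
  ultimately show ?thesis using e d11 d12 d21 d22 ker_def by simp
qed

lemma annihilator_ker_in_plane:
  assumes h: "h \<in> dual sc E" and v: "\<And>w. w \<in> ker \<Longrightarrow> h w = 0"
  shows "h \<in> plane"
proof -
  have "h = dscale (h a1) g1 + dscale (h a2) g2"
  proof (rule dual_eqI[OF h dual_plus[OF dual_dscale[OF g1] dual_dscale[OF g2]]])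
    fix x assume x: "x \<in> E"
    have "h (x - sc (g1 x) a1 - sc (g2 x) a2) = 0" using v ker_decomp x by blast
    moreover have "h (x - sc (g1 x) a1 - sc (g2 x) a2) = h x - g1 x * h a1 - g2 x * h a2"
      using dual_diff[OF E_subspace h] dual_scale[OF h] x a1 a2 E_diff E_scale by simp
    ultimately show "h x = (dscale (h a1) g1 + dscale (h a2) g2) x" by (simp add: algebra_simps)
  qed
  then show ?thesis using plane_memI by metis
qed

lemma line_ker_subspace: "subspace (line_ker v)"
  unfolding subspace_def line_ker_def
proof (intro conjI ballI allI)
  show "0 \<in> {w + sc k v | w k. w \<in> ker}" using subspace_0[OF ker_subspace] by (auto intro!: exI[of _ 0])
next
  fix x y assume "x \<in> {w + sc k v | w k. w \<in> ker}" "y \<in> {w + sc k v | w k. w \<in> ker}"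
  then obtain w k w' k' where "x = w + sc k v" "y = w' + sc k' v" "w \<in> ker" "w' \<in> ker" by blast
  then have "x + y = (w + w') + sc (k + k') v" "w + w' \<in> ker"
    using subspace_add[OF ker_subspace] by (auto simp: scale_left_distrib)
  then show "x + y \<in> {w + sc k v | w k. w \<in> ker}" by blast
next
  fix c x assume "x \<in> {w + sc k v | w k. w \<in> ker}"
  then obtain w k where "x = w + sc k v" "w \<in> ker" by blast
  then have "sc c x = sc c w + sc (c * k) v" "sc c w \<in> ker"
    using subspace_scale[OF ker_subspace] by (auto simp: scale_right_distrib)
  then show "sc c x \<in> {w + sc k v | w k. w \<in> ker}" by blast
qed

lemma line_ker_sub: "v \<in> E \<Longrightarrow> line_ker v \<subseteq> E"
  unfolding line_ker_def using ker_sub E_add E_scale by blast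

lemma ker_sub_line_ker: "ker \<subseteq> line_ker v"
proof
  fix w assume "w \<in> ker"
  then show "w \<in> line_ker v" unfolding line_ker_def by (intro CollectI exI[of _ w] exI[of _ 0]) simp
qed

lemma mem_line_ker: "v \<in> line_ker v"
  unfolding line_ker_def using subspace_0[OF ker_subspace] by (intro CollectI exI[of _ 0] exI[of _ 1]) simp

lemma plane_on_line_ker:
  assumes "g \<in> plane" "v \<in> E" "x \<in> line_ker v"
  obtains k where "g x = k * g v"
proof -
  obtain w k where "x = w + sc k v" "w \<in> ker" using assms(3) unfolding line_ker_def by blast
  then show ?thesis using that[of k] dual_add[OF plane_dual[OF assms(1)]] dual_scale[OF plane_dual[OF assms(1)]]
      ker_sub E_scale assms(2) plane_vanish[OF assms(1)] by auto
qed

lemma qnorm_set: "v \<in> E \<Longrightarrow> {N (v + w) | w. w \<in> ker} \<noteq> {} \<and> bdd_below {N (v + w) | w. w \<in> ker}"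
  using subspace_0[OF ker_subspace] N_nonneg E_add ker_sub by (auto intro!: bdd_belowI[of _ 0])

lemma qnorm_le: "v \<in> E \<Longrightarrow> w \<in> ker \<Longrightarrow> qnorm v \<le> N (v + w)"
  unfolding qnorm_def using qnorm_set by (auto intro!: cInf_lower)

lemma qnorm_greatest: "v \<in> E \<Longrightarrow> (\<And>w. w \<in> ker \<Longrightarrow> c \<le> N (v + w)) \<Longrightarrow> c \<le> qnorm v"
  unfolding qnorm_def using qnorm_set by (intro cInf_greatest) auto

lemma qnorm_approx: assumes "v \<in> E" "qnorm v < r" shows "\<exists>w\<in>ker. N (v + w) < r"
proof (rule ccontr)
  assume "\<not> ?thesis"
  then have "r \<le> qnorm v" by (intro qnorm_greatest[OF assms(1)]) (auto simp: not_less)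
  then show False using assms(2) by simp
qed

lemma qnorm_nonneg: "v \<in> E \<Longrightarrow> 0 \<le> qnorm v"
  using N_nonneg E_add ker_sub by (intro qnorm_greatest) auto

lemma qnorm_ker: assumes "v \<in> ker" shows "qnorm v = 0"
proof -
  have "v \<in> E" using assms ker_sub by blast
  moreover have "qnorm v \<le> N (v + - v)" using qnorm_le calculation subspace_neg[OF ker_subspace assms] .
  ultimately show ?thesis using qnorm_nonneg[of v] by simp
qed

lemma qnorm_pos: assumes "v \<in> E" "v \<notin> ker" shows "0 < qnorm v"
proof -
  obtain c where c: "c > 0" "\<And>y. y \<in> ker \<Longrightarrow> c \<le> N (v - y)"
    using subspace_dist_pos[OF ker_subspace ker_sub assms] by blast
  have "c \<le> qnorm v"
  proof (rule qnorm_greatest[OF assms(1)])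
    fix w assume "w \<in> ker"
    then show "c \<le> N (v + w)" using c(2)[of "- w"] subspace_neg[OF ker_subspace] by simp
  qed
  then show ?thesis using c by simp
qed

lemma qnorm_scale_le: assumes "v \<in> E" "w \<in> ker" shows "av c * qnorm v \<le> N (sc c v + w)"
proof (cases "c = 0")
  case True then show ?thesis using N_nonneg ker_sub assms by auto
next
  case False
  have w': "sc (inverse c) w \<in> ker" using subspace_scale[OF ker_subspace assms(2)] .
  have "sc c v + w = sc c (v + sc (inverse c) w)" using False by (simp add: scale_right_distrib)
  then have "N (sc c v + w) = av c * N (v + sc (inverse c) w)"
    using N_scale E_add assms(1) w' ker_sub by auto
  then show ?thesis using qnorm_le[OF assms(1) w'] by (simp add: mult_left_mono)
qed

lemma plane_eval_bound: assumes "g \<in> plane" "v \<in> E" shows "av (g v) \<le> nrm g * qnorm v"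
proof (cases "g = 0")
  case False
  have gd: "g \<in> dual sc E" using plane_dual assms(1) .
  have np: "nrm g > 0" using nrm_pos[OF gd False] .
  have "av (g v) / nrm g \<le> qnorm v"
  proof (rule qnorm_greatest[OF assms(2)])
    fix w assume w: "w \<in> ker"
    have "g (v + w) = g v" using dual_add[OF gd assms(2)] w ker_sub plane_vanish[OF assms(1) w] by auto
    then have "av (g v) \<le> nrm g * N (v + w)" using nrm_bound[OF gd] E_add assms(2) w ker_sub by force
    then show "av (g v) / nrm g \<le> N (v + w)" using np by (simp add: divide_le_eq mult.commute)
  qed
  then show ?thesis using np by (simp add: divide_le_eq mult.commute)
qed simp

end

context na_space
begin

lemma riesz_almost_orthogonal:
  assumes X: "subspace X" "X \<subseteq> E" and u: "u \<in> E" "u \<notin> X" and t: "0 < t" "t < 1"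
  obtains w where "u - w \<in> X" "\<And>y. y \<in> X \<Longrightarrow> t * N w \<le> N (w - y)"
proof -
  obtain c where c: "c > 0" "\<And>y. y \<in> X \<Longrightarrow> c \<le> N (u - y)" using subspace_dist_pos[OF X u] by blast
  define \<delta> where "\<delta> = Inf {N (u - y) | y. y \<in> X}"
  have S: "{N (u - y) | y. y \<in> X} \<noteq> {}" "bdd_below {N (u - y) | y. y \<in> X}"
    using subspace_0[OF X(1)] c by (auto intro!: bdd_belowI[of _ c])
  have \<delta>_le: "\<delta> \<le> N (u - y)" if "y \<in> X" for y
    unfolding \<delta>_def by (rule cInf_lower[OF _ S(2)]) (use that in auto)
  have "c \<le> \<delta>" unfolding \<delta>_def by (rule cInf_greatest[OF S(1)]) (use c in auto)
  then have "\<delta> < \<delta> / t" using c t by (simp add: field_simps)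
  then obtain y where y: "y \<in> X" "N (u - y) < \<delta> / t"
    unfolding \<delta>_def using cInf_less_iff[OF S] by auto
  show ?thesis
  proof (rule that[of "u - y"])
    show "u - (u - y) \<in> X" using y(1) by simp
    fix y' assume "y' \<in> X"
    then have "\<delta> \<le> N (u - y - y')" using \<delta>_le[of "y + y'"] subspace_add[OF X(1) y(1)] by (simp add: diff_diff_eq)
    moreover have "t * N (u - y) < \<delta>" using y(2) t by (simp add: field_simps)
    ultimately show "t * N (u - y) \<le> N (u - y - y')" by linarith
  qed
qed

end

context dual_plane
begin

lemma plane_kernel_decomp:
  assumes w: "w \<in> E" "w \<notin> ker" and z: "z \<in> E" and zw: "g2 w * g1 z = g1 w * g2 z"
  obtains \<beta> where "z - sc \<beta> w \<in> ker"
proof -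
  obtain \<beta> where \<beta>: "g1 z = \<beta> * g1 w" "g2 z = \<beta> * g2 w"
  proof (cases "g1 w = 0")
    case True
    then have "g2 w \<noteq> 0" using w ker_def by auto
    then show ?thesis using that[of "g2 z / g2 w"] zw True by (simp add: field_simps)
  next
    case False
    then show ?thesis using that[of "g1 z / g1 w"] zw by (simp add: field_simps)
  qed
  have "z - sc \<beta> w \<in> ker"
    unfolding ker_def using plane_eval[OF g1_plane z w(1)] plane_eval[OF g2_plane z w(1)] \<beta> E_diff E_scale z w(1)
    by simp
  then show ?thesis using that by blast
qed

text \<open>The ultrametric case split: either the \<open>w\<close>-component of \<open>x\<close> is dominated by the rest,
  or it is large enough to control \<open>N x\<close> through the almost orthogonality of \<open>w\<close>.\<close>
lemma qnorm_orth_estimate: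
  assumes v: "v \<in> E" and w: "w \<in> E" "\<And>y. y \<in> line_ker v \<Longrightarrow> t * N w \<le> N (w - y)"
    and t: "0 \<le> t" "t \<le> 1" and w0: "w0 \<in> ker"
  shows "t * (av \<alpha> * qnorm v) \<le> N (sc \<alpha> v + w0 + sc \<beta> w)"
proof -
  define A where "A = sc \<alpha> v + w0"
  have AE: "A \<in> E" unfolding A_def using w0 ker_sub E_add E_scale v by blast
  have AX: "A \<in> line_ker v" unfolding A_def line_ker_def using w0 by (auto simp: add.commute)
  have NA: "av \<alpha> * qnorm v \<le> N A" unfolding A_def using qnorm_scale_le[OF v w0] .
  have Nx: "av \<beta> * (t * N w) \<le> N (A + sc \<beta> w)"
  proof (cases "\<beta> = 0")
    case True then show ?thesis using N_nonneg AE by simp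
  next
    case False
    have y'X: "- sc (inverse \<beta>) A \<in> line_ker v"
      using subspace_neg[OF line_ker_subspace subspace_scale[OF line_ker_subspace AX]] .
    have "A + sc \<beta> w = sc \<beta> (w - (- sc (inverse \<beta>) A))"
      using False by (simp add: scale_right_distrib algebra_simps)
    then have "N (A + sc \<beta> w) = av \<beta> * N (w - (- sc (inverse \<beta>) A))"
      using N_scale[OF E_add[OF w(1) E_scale[OF AE]]] by simp
    then show ?thesis using w(2)[OF y'X] by (simp add: mult_left_mono)
  qed
  show ?thesis
  proof (cases "av \<beta> * N w < N A")
    case True
    then have "N (A + sc \<beta> w) = N A" using N_strict[OF AE E_scale[OF w(1)]] N_scale w(1) by simp
    moreover have "t * (av \<alpha> * qnorm v) \<le> av \<alpha> * qnorm v"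
      using t qnorm_nonneg[OF v] mult_right_mono[of t 1 "av \<alpha> * qnorm v"] by simp
    ultimately show ?thesis using NA unfolding A_def by linarith
  next
    case False
    then have "t * (av \<alpha> * qnorm v) \<le> av \<beta> * (t * N w)"
      using NA t mult_left_mono[of "av \<alpha> * qnorm v" "av \<beta> * N w" t] by (simp add: algebra_simps)
    then show ?thesis using Nx unfolding A_def by linarith
  qed
qed

text \<open>Duality between \<open>E / ker\<close> and \<open>plane\<close>: the quotient norm is the supremum of
  \<open>|g v| / \<parallel>g\<parallel>\<close> over \<open>g \<in> plane\<close> (only approximately attained).\<close>
lemma qnorm_normed_by_plane:
  assumes v: "v \<in> E" "v \<notin> ker" and t: "0 < t" "t < 1"
  shows "\<exists>g\<in>plane. g \<noteq> 0 \<and> t * qnorm v * nrm g \<le> av (g v)"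
proof -
  define g0 where "g0 = dscale (g2 v) g1 - dscale (g1 v) g2"
  have g0F: "g0 \<in> plane" unfolding g0_def by (intro plane_diff plane_scale g1_plane g2_plane)
  obtain u where u: "u \<in> E" "g0 u \<noteq> 0"
    using v a1 a2 d11 d12 d21 d22 unfolding ker_def g0_def by (cases "g2 v = 0") (auto intro!: that)
  have g0v: "g0 v = 0" by (simp add: g0_def algebra_simps)
  have "u \<notin> line_ker v"
  proof
    assume "u \<in> line_ker v"
    then obtain k where "g0 u = k * g0 v" by (rule plane_on_line_ker[OF g0F v(1)])
    then show False using u(2) g0v by simp
  qed
  then obtain w where w: "u - w \<in> line_ker v" "\<And>y. y \<in> line_ker v \<Longrightarrow> t * N w \<le> N (w - y)"
    using riesz_almost_orthogonal[OF line_ker_subspace line_ker_sub[OF v(1)] u(1) _ t] by blast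
  have "u - (u - w) \<in> E" using w(1) line_ker_sub[OF v(1)] u(1) E_diff by blast
  then have wE: "w \<in> E" by simp
  define g where "g = dscale (g2 w) g1 - dscale (g1 w) g2"
  have gF: "g \<in> plane" unfolding g_def by (intro plane_diff plane_scale g1_plane g2_plane)
  obtain k where "g0 (u - w) = k * g0 v" by (rule plane_on_line_ker[OF g0F v(1) w(1)])
  then have "g0 (u - w) = 0" using g0v by simp
  then have "g0 w \<noteq> 0" using u plane_eval[OF g0F u(1) wE, of 1] by simp
  then have gv: "g v \<noteq> 0" and wW: "w \<notin> ker"
    using plane_vanish[OF g0F] by (auto simp: g_def g0_def algebra_simps)
  have key: "t * qnorm v * av (g x) \<le> av (g v) * N x" if x: "x \<in> E" for x
  proof -
    define \<alpha> where "\<alpha> = g x / g v"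
    have "g (x - sc \<alpha> v) = 0" using plane_eval[OF gF x v(1)] gv by (simp add: \<alpha>_def)
    then have "g2 w * g1 (x - sc \<alpha> v) = g1 w * g2 (x - sc \<alpha> v)" by (simp add: g_def)
    then obtain \<beta> where \<beta>: "x - sc \<alpha> v - sc \<beta> w \<in> ker"
      by (rule plane_kernel_decomp[OF wE wW E_diff[OF x E_scale[OF v(1)]]])
    have "t * (av \<alpha> * qnorm v) \<le> N (sc \<alpha> v + (x - sc \<alpha> v - sc \<beta> w) + sc \<beta> w)"
      by (rule qnorm_orth_estimate[OF v(1) wE w(2) _ _ \<beta>]) (use t in auto)
    then have "t * (av \<alpha> * qnorm v) \<le> N x" by simp
    moreover have "av (g x) = av \<alpha> * av (g v)" unfolding \<alpha>_def using gv by (simp add: va_divide[OF av])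
    ultimately show ?thesis
      using mult_right_mono[of "t * (av \<alpha> * qnorm v)" "N x" "av (g v)"] by (simp add: algebra_simps)
  qed
  have qv: "0 < qnorm v" using qnorm_pos[OF v] .
  have "nrm g \<le> av (g v) / (t * qnorm v)"
    using key t qv by (intro nrm_least[OF plane_dual[OF gF]]) (auto simp: field_simps)
  then have "t * qnorm v * nrm g \<le> av (g v)" using t qv by (simp add: field_simps)
  moreover have "g \<noteq> 0" using gv by auto
  ultimately show ?thesis using gF by blast
qed

lemma qnorm_le_of_bound:
  assumes v: "v \<in> E" "v \<notin> ker" and M: "\<And>g. g \<in> plane \<Longrightarrow> av (g v) \<le> M * nrm g"
  shows "qnorm v \<le> M"
proof (rule field_le_mult_one_interval)
  fix s :: real assume s: "0 < s" "s < 1"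
  obtain g where g: "g \<in> plane" "g \<noteq> 0" "s * qnorm v * nrm g \<le> av (g v)"
    using qnorm_normed_by_plane[OF v s] by blast
  have "0 < nrm g" using nrm_pos plane_dual g by auto
  moreover have "s * qnorm v * nrm g \<le> M * nrm g" using g(3) M[OF g(1)] by linarith
  ultimately show "s * qnorm v \<le> M" by (simp add: mult_le_cancel_right_pos)
qed

lemma qnorm_ge_of_approx:
  assumes v: "v \<in> E" and M: "\<And>s. 0 < s \<Longrightarrow> s < 1 \<Longrightarrow> \<exists>g\<in>plane. g \<noteq> 0 \<and> s * M * nrm g \<le> av (g v)"
  shows "M \<le> qnorm v"
proof (rule field_le_mult_one_interval)
  fix s :: real assume s: "0 < s" "s < 1"
  obtain g where g: "g \<in> plane" "g \<noteq> 0" "s * M * nrm g \<le> av (g v)" using M[OF s] by blast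
  have "0 < nrm g" using nrm_pos plane_dual g by auto
  moreover have "s * M * nrm g \<le> qnorm v * nrm g" using g(3) plane_eval_bound[OF g(1) v] by (simp add: mult.commute)
  ultimately show "s * M \<le> qnorm v" by (simp add: mult_le_cancel_right_pos)
qed

end

context dual_plane
begin

definition orth_pair where
  "orth_pair h1 h2 \<longleftrightarrow> h1 \<in> plane \<and> h2 \<in> plane \<and> h1 \<noteq> 0 \<and> h2 \<noteq> 0 \<and>
     (\<forall>\<alpha> \<beta>. nrm (dscale \<alpha> h1 + dscale \<beta> h2) = max (av \<alpha> * nrm h1) (av \<beta> * nrm h2))"

definition has_orth_pair where "has_orth_pair \<longleftrightarrow> (\<exists>h1 h2. orth_pair h1 h2)"

text \<open>The functional \<open>v \<mapsto> c\<close>, \<open>ker \<mapsto> 0\<close> on \<open>line_ker v\<close> has norm \<open>|c| / qnorm v\<close>,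
  and its extensions to \<open>E\<close> are exactly the elements of \<open>plane\<close> taking the value \<open>c\<close> at \<open>v\<close>.\<close>
definition line_functionals_extend where
  "line_functionals_extend \<longleftrightarrow>
     (\<forall>v\<in>E. \<forall>c. c \<noteq> 0 \<and> qnorm v = av c \<longrightarrow> (\<exists>g\<in>plane. g v = c \<and> nrm g \<le> 1))"

lemma plane_nrm_dscale: "g \<in> plane \<Longrightarrow> nrm (dscale c g) = av c * nrm g"
  using nrm_dscale plane_dual by blast

lemma orth_pair_of_lower:
  assumes h: "h1 \<in> plane" "h2 \<in> plane" "h1 \<noteq> 0" "h2 \<noteq> 0"
    and low: "\<And>\<alpha> \<beta>. av \<alpha> * nrm h1 \<le> nrm (dscale \<alpha> h1 + dscale \<beta> h2)"
  shows "orth_pair h1 h2"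
  unfolding orth_pair_def
proof (intro conjI allI h)
  fix \<alpha> \<beta>
  have d1: "dscale \<alpha> h1 \<in> dual sc E" "dscale \<beta> h2 \<in> dual sc E" using plane_dual h dual_dscale by auto
  have le: "nrm (dscale \<alpha> h1 + dscale \<beta> h2) \<le> max (av \<alpha> * nrm h1) (av \<beta> * nrm h2)"
    using nrm_add[OF d1] plane_nrm_dscale h by simp
  show "nrm (dscale \<alpha> h1 + dscale \<beta> h2) = max (av \<alpha> * nrm h1) (av \<beta> * nrm h2)"
  proof (cases "av \<alpha> * nrm h1 < av \<beta> * nrm h2")
    case True
    then have "nrm (dscale \<beta> h2 + dscale \<alpha> h1) = nrm (dscale \<beta> h2)"
      using nrm_strict d1 plane_nrm_dscale h by simp
    then show ?thesis using True plane_nrm_dscale h by (simp add: add.commute)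
  next
    case False
    then show ?thesis using le low[of \<alpha> \<beta>] by simp
  qed
qed

lemma orth_pair_ne: "orth_pair a b \<Longrightarrow> a \<noteq> b"
proof
  assume o: "orth_pair a b" and ab: "a = b"
  have "nrm (dscale 1 a + dscale (-1) b) = max (av 1 * nrm a) (av (-1) * nrm b)"
    using o unfolding orth_pair_def by blast
  moreover have "dscale 1 a + dscale (-1) b = 0" using ab by (simp add: dscale_def fun_eq_iff)
  ultimately have "nrm a = 0" using ab by simp
  then show False using o nrm_zero_iff plane_dual unfolding orth_pair_def by blast
qed

lemma orth_pair_indep: assumes "orth_pair a b" shows "dv.independent {a, b}"
proof
  assume "dv.dependent {a, b}"
  then obtain x where x: "x \<in> {a, b}" "x \<in> dv.span ({a, b} - {x})" unfolding dv.dependent_def by blast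
  have na: "nrm a > 0" "nrm b > 0" using assms nrm_pos plane_dual unfolding orth_pair_def by auto
  have e: "\<And>\<alpha> \<beta>. nrm (dscale \<alpha> a + dscale \<beta> b) = max (av \<alpha> * nrm a) (av \<beta> * nrm b)"
    using assms unfolding orth_pair_def by blast
  from x orth_pair_ne[OF assms] consider "a \<in> dv.span {b}" | "b \<in> dv.span {a}"
    by (auto simp: insert_Diff_if)
  then show False
  proof cases
    case 1
    then obtain k where "a = dscale k b" using dv.span_singleton by auto
    then have "dscale 1 a + dscale (- k) b = 0" by (simp add: dscale_def fun_eq_iff)
    then show False using e[of 1 "- k"] na by simp
  next
    case 2
    then obtain k where "b = dscale k a" using dv.span_singleton by auto
    then have "dscale (- k) a + dscale 1 b = 0" by (simp add: dscale_def fun_eq_iff)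
    then show False using e[of "- k" 1] na by simp
  qed
qed

lemma plane_span_pair:
  assumes "a \<in> plane" "b \<in> plane" "dv.independent {a, b}" "a \<noteq> b" "g \<in> plane"
  obtains \<alpha> \<beta> where "g = dscale \<alpha> a + dscale \<beta> b"
proof (rule ccontr)
  assume nex: "\<not> thesis"
  then have "g \<notin> dv.span {a, b}" using dv_span_pair that by blast
  then have ind: "dv.independent (insert g {a, b})" using dv.independent_insertI assms(3) by blast
  have "insert g {a, b} \<subseteq> dv.span {g1, g2}" using assms plane_span by auto
  then have "card (insert g {a, b}) \<le> card {g1, g2}" using dv.independent_span_bound[OF _ ind] by auto
  moreover have "g \<noteq> a" "g \<noteq> b" using nex that[of 1 0] that[of 0 1] by auto
  ultimately show False using assms(4) g1_ne_g2 by simp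
qed

lemma orth_pair_coords:
  assumes o: "orth_pair h1 h2" and g: "g \<in> plane"
  obtains \<alpha> \<beta> where "g = dscale \<alpha> h1 + dscale \<beta> h2" "nrm g = max (av \<alpha> * nrm h1) (av \<beta> * nrm h2)"
proof -
  have "h1 \<in> plane" "h2 \<in> plane" using o unfolding orth_pair_def by auto
  then obtain \<alpha> \<beta> where "g = dscale \<alpha> h1 + dscale \<beta> h2"
    using plane_span_pair orth_pair_indep[OF o] orth_pair_ne[OF o] g by blast
  then show ?thesis using that o unfolding orth_pair_def by blast
qed

lemma orth_pair_extend: assumes o: "orth_pair h1 h2" and u: "u \<in> plane" "u \<noteq> 0" shows "\<exists>w. orth_pair u w"
proof -
  have h: "h1 \<in> plane" "h2 \<in> plane" "h1 \<noteq> 0" "h2 \<noteq> 0" using o unfolding orth_pair_def by auto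
  obtain \<alpha> \<beta> where ab: "u = dscale \<alpha> h1 + dscale \<beta> h2" and nu: "nrm u = max (av \<alpha> * nrm h1) (av \<beta> * nrm h2)"
    using orth_pair_coords[OF o u(1)] by blast
  have ortho: "nrm (dscale p h1 + dscale r h2) = max (av p * nrm h1) (av r * nrm h2)" for p r
    using o unfolding orth_pair_def by blast
  show ?thesis
  proof (cases "av \<beta> * nrm h2 \<le> av \<alpha> * nrm h1")
    case True
    have "orth_pair u h2"
    proof (rule orth_pair_of_lower[OF u(1) h(2) u(2) h(4)])
      fix s m
      have "dscale s u + dscale m h2 = dscale (s * \<alpha>) h1 + dscale (s * \<beta> + m) h2"
        unfolding ab by (simp add: dscale_def fun_eq_iff algebra_simps)
      then show "av s * nrm u \<le> nrm (dscale s u + dscale m h2)"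
        using ortho nu True by (simp add: av_mult)
    qed
    then show ?thesis by blast
  next
    case False
    have "orth_pair u h1"
    proof (rule orth_pair_of_lower[OF u(1) h(1) u(2) h(3)])
      fix s m
      have "dscale s u + dscale m h1 = dscale (s * \<alpha> + m) h1 + dscale (s * \<beta>) h2"
        unfolding ab by (simp add: dscale_def fun_eq_iff algebra_simps)
      then show "av s * nrm u \<le> nrm (dscale s u + dscale m h1)"
        using ortho nu False by (simp add: av_mult)
    qed
    then show ?thesis by blast
  qed
qed

abbreviation orth_set :: "('b \<Rightarrow> 'a) set \<Rightarrow> bool" where
  "orth_set X \<equiv> na_orthogonal dscale plane nrm X"

lemma orth_set_sum: assumes "orth_set X" "finite Y" "Y \<subseteq> X" "Y \<noteq> {}"
  shows "nrm (\<Sum>y\<in>Y. dscale (l y) y) = Max ((\<lambda>y. nrm (dscale (l y) y)) ` Y)"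
  using assms unfolding na_orthogonal_def by blast

lemma orth_set_pair: assumes o: "orth_set X" and ab: "a \<in> X" "b \<in> X" "a \<noteq> b" shows "orth_pair a b"
proof -
  have abF: "a \<in> plane" "b \<in> plane" "a \<noteq> 0" "b \<noteq> 0" using o ab unfolding na_orthogonal_def by auto
  show ?thesis unfolding orth_pair_def
  proof (intro conjI allI abF)
    fix \<alpha> \<beta> :: 'a
    have "nrm (\<Sum>y\<in>{a, b}. dscale (if y = a then \<alpha> else \<beta>) y)
        = Max ((\<lambda>y. nrm (dscale (if y = a then \<alpha> else \<beta>) y)) ` {a, b})"
      by (rule orth_set_sum[OF o]) (use ab in auto)
    then show "nrm (dscale \<alpha> a + dscale \<beta> b) = max (av \<alpha> * nrm a) (av \<beta> * nrm b)"
      using ab(3) plane_nrm_dscale abF by simp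
  qed
qed

lemma orth_pair_orth_set: assumes o: "orth_pair a b" shows "orth_set {a, b}"
  unfolding na_orthogonal_def
proof (intro conjI allI impI)
  show "{a, b} \<subseteq> plane - {0}" using o unfolding orth_pair_def by auto
  fix Y l assume Y: "finite Y \<and> Y \<subseteq> {a, b} \<and> Y \<noteq> {}"
  have F: "a \<in> plane" "b \<in> plane" using o unfolding orth_pair_def by auto
  have e: "nrm (dscale (l a) a + dscale (l b) b) = max (av (l a) * nrm a) (av (l b) * nrm b)"
    using o unfolding orth_pair_def by blast
  from Y consider "Y = {a}" | "Y = {b}" | "Y = {a, b}" by blast
  then show "nrm (\<Sum>y\<in>Y. dscale (l y) y) = Max ((\<lambda>y. nrm (dscale (l y) y)) ` Y)"
    by cases (use orth_pair_ne[OF o] e F plane_nrm_dscale in auto)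
qed

lemma orth_set_singleton: "u \<in> plane \<Longrightarrow> u \<noteq> 0 \<Longrightarrow> orth_set {u}"
  unfolding na_orthogonal_def
proof (intro conjI allI impI)
  fix Y l assume "finite Y \<and> Y \<subseteq> {u} \<and> Y \<noteq> {}"
  then have "Y = {u}" by blast
  then show "nrm (\<Sum>y\<in>Y. dscale (l y) y) = Max ((\<lambda>y. nrm (dscale (l y) y)) ` Y)" by simp
qed auto

lemma orth_set_indep: assumes o: "orth_set X" shows "dv.independent X"
proof
  assume "dv.dependent X"
  then obtain t u where t: "finite t" "t \<subseteq> X" "(\<Sum>v\<in>t. dscale (u v) v) = 0" "\<exists>v\<in>t. u v \<noteq> 0"
    unfolding dv.dependent_explicit by blast
  obtain v where v: "v \<in> t" "u v \<noteq> 0" using t(4) by blast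
  have "Max ((\<lambda>y. nrm (dscale (u y) y)) ` t) = 0" using orth_set_sum[OF o t(1,2), of u] t(3) v by auto
  moreover have "nrm (dscale (u v) v) \<le> Max ((\<lambda>y. nrm (dscale (u y) y)) ` t)"
    using t(1) v by (intro Max_ge) auto
  moreover have "v \<in> plane" "v \<noteq> 0" using o t(2) v unfolding na_orthogonal_def by auto
  then have "nrm (dscale (u v) v) > 0" using plane_nrm_dscale nrm_pos plane_dual v va_pos[OF av] by simp
  ultimately show False by linarith
qed

lemma orth_set_card: assumes o: "orth_set X" shows "finite X \<and> card X \<le> 2"
proof -
  have "X \<subseteq> dv.span {g1, g2}" using o plane_span unfolding na_orthogonal_def by blast
  from dv.independent_span_bound[OF _ orth_set_indep[OF o] this] show ?thesis using g1_ne_g2 by simp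
qed

lemma orth_dim_ne_2_if_no_orth_pair: assumes "\<not> has_orth_pair" shows "orth_dim dscale plane nrm \<noteq> 2"
proof -
  have "max_orthogonal dscale plane nrm {g1}"
    unfolding max_orthogonal_def
  proof (intro conjI allI impI)
    show "orth_set {g1}" using orth_set_singleton g1_plane g1_nz by blast
    fix Y assume Y: "orth_set Y \<and> {g1} \<subseteq> Y"
    show "Y = {g1}"
    proof (rule ccontr)
      assume "Y \<noteq> {g1}"
      then obtain y where "y \<in> Y" "y \<noteq> g1" using Y by blast
      then show False using orth_set_pair Y assms has_orth_pair_def by blast
    qed
  qed
  then have m: "max_orthogonal dscale plane nrm (SOME X. max_orthogonal dscale plane nrm X)" by (rule someI)
  show ?thesis
  proof
    assume "orth_dim dscale plane nrm = 2"
    then obtain a b where "(SOME X. max_orthogonal dscale plane nrm X) = {a, b}" "a \<noteq> b"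
      unfolding orth_dim_def using card_2_iff by metis
    then show False using m orth_set_pair assms has_orth_pair_def unfolding max_orthogonal_def by auto
  qed
qed

text \<open>Once an orthogonal pair exists, every orthogonal singleton extends to one,
  so all maximal orthogonal sets have two elements.\<close>
lemma orth_dim_2_if_orth_pair: assumes o: "orth_pair h1 h2" shows "orth_dim dscale plane nrm = 2"
proof -
  have h: "h1 \<in> plane" "h1 \<noteq> 0" using o unfolding orth_pair_def by auto
  have "max_orthogonal dscale plane nrm {h1, h2}"
    unfolding max_orthogonal_def
  proof (intro conjI allI impI)
    show "orth_set {h1, h2}" using orth_pair_orth_set[OF o] .
    fix Y assume Y: "orth_set Y \<and> {h1, h2} \<subseteq> Y"
    have "finite Y \<and> card Y \<le> 2" using orth_set_card Y by blast
    moreover have "card {h1, h2} = 2" using orth_pair_ne[OF o] by simp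
    ultimately show "Y = {h1, h2}" using Y by (metis card_seteq)
  qed
  then have "max_orthogonal dscale plane nrm (SOME X. max_orthogonal dscale plane nrm X)" by (rule someI)
  then obtain X where X: "X = (SOME X. max_orthogonal dscale plane nrm X)" "orth_set X"
    "\<And>Y. orth_set Y \<Longrightarrow> X \<subseteq> Y \<Longrightarrow> Y = X"
    unfolding max_orthogonal_def by auto
  have cX: "finite X" "card X \<le> 2" using orth_set_card X(2) by auto
  have "card X = 2"
  proof (rule ccontr)
    assume "card X \<noteq> 2"
    then have "card X = 0 \<or> card X = 1" using cX by linarith
    then consider "X = {}" | u where "X = {u}" using cX card_1_singletonE by auto
    then show False
    proof cases
      case 1
      then show False using X(3)[of "{h1}"] orth_set_singleton h by auto
    next
      case 2
      then have u: "u \<in> plane" "u \<noteq> 0" using X(2) unfolding na_orthogonal_def by auto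
      obtain w where w: "orth_pair u w" using orth_pair_extend[OF o u] by blast
      then show False using X(3)[of "{u, w}"] orth_pair_orth_set 2 orth_pair_ne[OF w] by auto
    qed
  qed
  then show ?thesis unfolding orth_dim_def X(1) .
qed

lemma orth_dim_2_iff: "orth_dim dscale plane nrm = 2 \<longleftrightarrow> has_orth_pair"
  using orth_dim_ne_2_if_no_orth_pair orth_dim_2_if_orth_pair has_orth_pair_def by blast

end

context dual_plane
begin

lemma orth_pair_imp_extend: assumes o: "orth_pair h1 h2" shows line_functionals_extend
  unfolding line_functionals_extend_def
proof (intro ballI allI impI)
  fix v c assume v: "v \<in> E" and c: "c \<noteq> 0 \<and> qnorm v = av c"
  have qv: "qnorm v > 0" using c va_pos[OF av] by simp
  have vW: "v \<notin> ker" using qnorm_ker qv by force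
  have h: "h1 \<in> plane" "h2 \<in> plane" "h1 \<noteq> 0" "h2 \<noteq> 0" using o unfolding orth_pair_def by auto
  have np: "nrm h1 > 0" "nrm h2 > 0" using h nrm_pos plane_dual by auto
  define M where "M = max (av (h1 v) / nrm h1) (av (h2 v) / nrm h2)"
  have "av (h1 v) / nrm h1 \<le> M" "av (h2 v) / nrm h2 \<le> M" unfolding M_def by simp_all
  then have hM: "av (h1 v) \<le> M * nrm h1" "av (h2 v) \<le> M * nrm h2" using np by (simp_all add: divide_le_eq)
  have "qnorm v \<le> M"
  proof (rule qnorm_le_of_bound[OF v vW])
    fix g assume "g \<in> plane"
    then obtain \<alpha> \<beta> where ab: "g = dscale \<alpha> h1 + dscale \<beta> h2"
      and ng: "nrm g = max (av \<alpha> * nrm h1) (av \<beta> * nrm h2)"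
      using orth_pair_coords[OF o] by blast
    have "av (g v) \<le> max (av \<alpha> * av (h1 v)) (av \<beta> * av (h2 v))"
      using ab va_add[OF av, of "\<alpha> * h1 v" "\<beta> * h2 v"] by (simp add: av_mult)
    also have "\<dots> \<le> max (av \<alpha> * (M * nrm h1)) (av \<beta> * (M * nrm h2))"
      using hM by (intro max.mono mult_left_mono) auto
    also have "\<dots> = M * nrm g"
      unfolding ng using np hM by (simp add: max_mult_distrib_left algebra_simps le_max_iff_disj M_def)
    finally show "av (g v) \<le> M * nrm g" .
  qed
  then obtain h where h': "h \<in> plane" "h \<noteq> 0" "qnorm v \<le> av (h v) / nrm h"
    unfolding M_def using h by (cases "av (h1 v) / nrm h1 \<le> av (h2 v) / nrm h2") (auto simp: max_def)
  have hp: "nrm h > 0" using nrm_pos plane_dual h' by auto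
  have hv: "h v \<noteq> 0" using h'(3) qv by auto
  define g where "g = dscale (c / h v) h"
  have "nrm g = av c / av (h v) * nrm h" unfolding g_def using plane_nrm_dscale h' by (simp add: va_divide[OF av])
  also have "\<dots> \<le> 1" using h'(3) c hp va_pos[OF av hv] by (simp add: field_simps)
  finally have "nrm g \<le> 1" .
  moreover have "g \<in> plane" "g v = c" unfolding g_def using plane_scale[OF h'(1)] hv by auto
  ultimately show "\<exists>g\<in>plane. g v = c \<and> nrm g \<le> 1" by blast
qed

lemma extend_no_orth_pair_imp_qnorm_notin_value_group:
  assumes nOP: "\<not> has_orth_pair" and ext: line_functionals_extend and v: "v \<in> E" "v \<notin> ker"
  shows "qnorm v \<notin> value_group av"
proof
  assume "qnorm v \<in> value_group av"
  then obtain c where c: "c \<noteq> 0" "qnorm v = av c" unfolding value_group_def by auto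
  obtain g where g: "g \<in> plane" "g v = c" "nrm g \<le> 1" using ext v c unfolding line_functionals_extend_def by blast
  define h where "h = dscale (g2 v) g1 - dscale (g1 v) g2"
  have hF: "h \<in> plane" unfolding h_def by (intro plane_diff plane_scale g1_plane g2_plane)
  have hv: "h v = 0" by (simp add: h_def algebra_simps)
  have "h a1 \<noteq> 0 \<or> h a2 \<noteq> 0" using v d11 d12 d21 d22 unfolding ker_def h_def by auto
  then have hnz: "h \<noteq> 0" by auto
  have "orth_pair g h"
  proof (rule orth_pair_of_lower[OF g(1) hF _ hnz])
    show "g \<noteq> 0" using g c by auto
    fix \<alpha> \<beta>
    have "av \<alpha> * av c \<le> nrm (dscale \<alpha> g + dscale \<beta> h) * av c"
      using plane_eval_bound[OF plane_comb[OF g(1) hF] v(1)] g(2) hv c by (simp add: av_mult)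
    then have "av \<alpha> \<le> nrm (dscale \<alpha> g + dscale \<beta> h)" using va_pos[OF av c(1)] by simp
    then show "av \<alpha> * nrm g \<le> nrm (dscale \<alpha> g + dscale \<beta> h)"
      using g(3) mult_left_mono[of "nrm g" 1 "av \<alpha>"] by simp
  qed
  then show False using nOP has_orth_pair_def by blast
qed

lemma qnorm_notin_value_group_imp_extend:
  assumes "\<And>v. v \<in> E \<Longrightarrow> v \<notin> ker \<Longrightarrow> qnorm v \<notin> value_group av"
  shows line_functionals_extend
  unfolding line_functionals_extend_def
proof (intro ballI allI impI)
  fix v c assume v: "v \<in> E" and c: "c \<noteq> 0 \<and> qnorm v = av c"
  then have "qnorm v \<in> value_group av" unfolding value_group_def by auto
  moreover have "v \<notin> ker" using qnorm_ker c va_pos[OF av] by force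
  ultimately show "\<exists>g\<in>plane. g v = c \<and> nrm g \<le> 1" using assms v by blast
qed

lemma line_functional_opnorm:
  assumes v: "v \<in> E" and \<phi>: "\<phi> \<in> plane" "\<phi> v = c" and c: "c \<noteq> 0" "qnorm v = av c"
  shows "opnorm av (line_ker v) N (restr (line_ker v) \<phi>) = 1"
proof -
  let ?X = "line_ker v" and ?f = "restr (line_ker v) \<phi>"
  have X: "subspace ?X" "?X \<subseteq> E" using line_ker_subspace line_ker_sub[OF v] .
  have fd: "?f \<in> dual sc ?X" using restr_dual[OF X(2,1) plane_dual[OF \<phi>(1)]] .
  have fX: "?f (w + sc k v) = k * c" if w: "w \<in> ker" for w k
  proof -
    have "w + sc k v \<in> ?X" using w unfolding line_ker_def by blast
    then have "?f (w + sc k v) = \<phi> w + k * \<phi> v" unfolding restr_def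
      using dual_add[OF plane_dual[OF \<phi>(1)]] dual_scale[OF plane_dual[OF \<phi>(1)] v] w ker_sub E_scale v by auto
    then show ?thesis using plane_vanish[OF \<phi>(1) w] \<phi>(2) by simp
  qed
  have qv: "0 < qnorm v" using c va_pos[OF av] by simp
  have "opnorm av ?X N ?f \<le> 1"
  proof (rule opnorm_least[OF X fd])
    fix x assume "x \<in> ?X"
    then obtain w k where wk: "x = w + sc k v" "w \<in> ker" unfolding line_ker_def by blast
    have "av (?f x) = av k * qnorm v" using fX[OF wk(2)] c wk(1) by (simp add: av_mult)
    also have "\<dots> \<le> N x" using qnorm_scale_le[OF v wk(2)] wk(1) by (simp add: add.commute)
    finally show "av (?f x) \<le> 1 * N x" by simp
  qed simp
  moreover have "1 \<le> opnorm av ?X N ?f"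
  proof (rule field_le_mult_one_interval)
    fix t :: real assume t: "0 < t" "t < 1"
    have "qnorm v < qnorm v / t" using qv t by (simp add: field_simps)
    then obtain w where w: "w \<in> ker" "N (v + w) < qnorm v / t" using qnorm_approx[OF v] by blast
    let ?y = "w + sc 1 v"
    have y: "?y \<in> ?X" "N ?y < qnorm v / t"
      unfolding line_ker_def using w by (blast, simp add: add.commute)
    have "qnorm v \<le> opnorm av ?X N ?f * N ?y"
      using opnorm_bound[OF X fd y(1)] fX[OF w(1), of 1] c by simp
    also have "\<dots> \<le> opnorm av ?X N ?f * (qnorm v / t)"
      by (rule mult_left_mono[OF less_imp_le[OF y(2)] opnorm_nonneg[OF X fd]])
    finally show "t * 1 \<le> opnorm av ?X N ?f" using qv t by (simp add: field_simps)
  qed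
  ultimately show ?thesis by simp
qed

lemma SE_imp_extend: assumes se: "SE av sc E N" shows line_functionals_extend
  unfolding line_functionals_extend_def
proof (intro ballI allI impI)
  fix v c assume v: "v \<in> E" and c: "c \<noteq> 0 \<and> qnorm v = av c"
  have "v \<notin> ker" using qnorm_ker c va_pos[OF av] by force
  then have "g1 v \<noteq> 0 \<or> g2 v \<noteq> 0" using v ker_def by auto
  then obtain \<phi> where \<phi>: "\<phi> \<in> plane" "\<phi> v = c"
    using plane_scale[OF g1_plane, of "c / g1 v"] plane_scale[OF g2_plane, of "c / g2 v"] by force
  let ?X = "line_ker v" and ?f = "restr (line_ker v) \<phi>"
  have "\<exists>g\<in>dual sc E. (\<forall>x\<in>?X. g x = ?f x) \<and> nrm g = 1"
    by (rule se[unfolded SE_def, rule_format], intro conjI line_ker_subspace line_ker_sub[OF v]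
        restr_dual[OF line_ker_sub[OF v] line_ker_subspace plane_dual[OF \<phi>(1)]] line_functional_opnorm[OF v \<phi>])
      (use c in auto)
  then obtain g where g: "g \<in> dual sc E" "\<And>x. x \<in> ?X \<Longrightarrow> g x = ?f x" "nrm g = 1" by blast
  have "g \<in> plane"
  proof (rule annihilator_ker_in_plane[OF g(1)])
    fix w assume w: "w \<in> ker"
    then have "w \<in> ?X" using ker_sub_line_ker by blast
    then show "g w = 0" using g(2) plane_vanish[OF \<phi>(1) w] unfolding restr_def by simp
  qed
  moreover have "g v = c" using g(2)[OF mem_line_ker] \<phi>(2) mem_line_ker restr_def by simp
  ultimately show "\<exists>g\<in>plane. g v = c \<and> nrm g \<le> 1" using g(3) by auto
qed

end

section \<open>The spaces \<open>([1,x], |\<cdot>|\<^sub>t)\<close>\<close>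

locale immediate_ext =
  fixes av :: "'a::field \<Rightarrow> real" and bv :: "'c::field \<Rightarrow> real" and \<iota> :: "'a \<Rightarrow> 'c"
  assumes K_abs: "nonarch_abs av" and K_complete: "abs_complete av"
    and L_abs: "nonarch_abs bv" and imm: "immediate_extension av bv \<iota>"
begin

lemmas bv_simps[simp] = va_0[OF L_abs] va_1[OF L_abs] va_uminus[OF L_abs] va_minus1[OF L_abs]
  va_nonneg[OF L_abs] va_zero_iff[OF L_abs]
lemmas bv_mult = va_mult[OF L_abs]
lemmas K_simps[simp] = va_0[OF K_abs] va_nonneg[OF K_abs] va_zero_iff[OF K_abs]

lemma i_add[simp]: "\<iota> (a + b) = \<iota> a + \<iota> b" using imm unfolding immediate_extension_def by blast
lemma i_mult[simp]: "\<iota> (a * b) = \<iota> a * \<iota> b" using imm unfolding immediate_extension_def by blast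
lemma i_one[simp]: "\<iota> 1 = 1" using imm unfolding immediate_extension_def by blast
lemma i_abs[simp]: "bv (\<iota> a) = av a" using imm unfolding immediate_extension_def by blast
lemma value_groups_eq: "value_group bv = value_group av" using imm unfolding immediate_extension_def by blast

lemma i_zero[simp]: "\<iota> 0 = 0"
proof -
  have "\<iota> 0 = \<iota> 0 + \<iota> 0" using i_add[of 0 0] by simp
  then show ?thesis by (metis add_cancel_right_right)
qed

lemma i_uminus[simp]: "\<iota> (- a) = - \<iota> a"
  using add.inverse_unique[of "\<iota> a" "\<iota> (-a)"] i_add[of a "- a"] by simp
lemma i_diff[simp]: "\<iota> (a - b) = \<iota> a - \<iota> b" using i_add[of a "- b"] by simp

lemma i_eq_iff[simp]: "\<iota> a = \<iota> b \<longleftrightarrow> a = b"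
proof
  assume "\<iota> a = \<iota> b"
  then have "av (a - b) = 0" using i_abs[of "a - b"] by (simp del: i_abs)
  then show "a = b" using va_zero_iff[OF K_abs] by simp
qed simp

lemma i_zero_iff[simp]: "\<iota> a = 0 \<longleftrightarrow> a = 0" using i_eq_iff[of a 0] by simp
lemma i_inverse[simp]: "\<iota> (inverse a) = inverse (\<iota> a)"
proof (cases "a = 0")
  case False
  then have "\<iota> a * \<iota> (inverse a) = 1" using i_mult[of a "inverse a"] by simp
  then show ?thesis by (metis inverse_unique)
qed simp

lemma i_divide[simp]: "\<iota> (a / b) = \<iota> a / \<iota> b" by (simp add: divide_inverse)

lemma dist_set: "{bv (x - \<iota> a) | a. True} \<noteq> {}" "bdd_below {bv (x - \<iota> a) | a. True}"
  by (auto intro!: bdd_belowI[of _ 0])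

lemma dist_to_K_le: "dist_to_K bv \<iota> x \<le> bv (x - \<iota> a)"
  unfolding dist_to_K_def using dist_set by (auto intro!: cInf_lower)

lemma dist_to_K_nonneg: "0 \<le> dist_to_K bv \<iota> x"
  unfolding dist_to_K_def using dist_set by (auto intro!: cInf_greatest)

lemma dist_to_K_approx: assumes "dist_to_K bv \<iota> x < r" shows "\<exists>a. bv (x - \<iota> a) < r"
proof (rule ccontr)
  assume "\<not> ?thesis"
  then have "r \<le> dist_to_K bv \<iota> x" unfolding dist_to_K_def using dist_set
    by (intro cInf_greatest) (auto simp: not_less)
  then show False using assms by simp
qed

text \<open>\<open>K\<close> is complete, hence closed in \<open>K\<^sup>\<or>\<close>.\<close>
lemma dist_to_K_pos: assumes x: "x \<notin> range \<iota>" shows "0 < dist_to_K bv \<iota> x"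
proof (rule ccontr)
  assume "\<not> ?thesis"
  then have "dist_to_K bv \<iota> x < inverse (real (Suc n))" for n using dist_to_K_nonneg[of x] by simp
  then have "\<forall>n. \<exists>a. bv (x - \<iota> a) < inverse (real (Suc n))" using dist_to_K_approx by blast
  then obtain k where k: "\<And>n. bv (x - \<iota> (k n)) < inverse (real (Suc n))" by metis
  have "1 * av (k m - k n) \<le> max (bv (x - \<iota> (k m))) (bv (x - \<iota> (k n)))" for m n
    using va_diff[OF L_abs, of "x - \<iota> (k n)" "x - \<iota> (k m)"] i_abs[of "k m - k n"]
    by (simp add: max.commute del: i_abs)
  from ultrametric_Cauchy[OF _ this k] obtain l where l: "\<And>e. e > 0 \<Longrightarrow> \<exists>M. \<forall>n\<ge>M. av (k n - l) < e"
    using K_complete unfolding abs_complete_def by force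
  have "bv (x - \<iota> l) < e" if e: "e > 0" for e
  proof -
    obtain M1 where M1: "inverse (real (Suc M1)) < e" using reals_Archimedean e by blast
    obtain M2 where M2: "\<And>n. n \<ge> M2 \<Longrightarrow> av (k n - l) < e" using l e by blast
    define n where "n = max M1 M2"
    have "inverse (real (Suc n)) \<le> inverse (real (Suc M1))" unfolding n_def by (simp add: field_simps)
    then have "bv (x - \<iota> (k n)) < e" using k[of n] M1 by linarith
    moreover have "av (k n - l) < e" using M2 unfolding n_def by simp
    moreover have "x - \<iota> l = (x - \<iota> (k n)) + \<iota> (k n - l)" by simp
    then have "bv (x - \<iota> l) \<le> max (bv (x - \<iota> (k n))) (av (k n - l))"
      using va_add[OF L_abs, of "x - \<iota> (k n)" "\<iota> (k n - l)"] by (simp only: i_abs)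
    ultimately show ?thesis by simp
  qed
  then have "bv (x - \<iota> l) = 0" using bv_simps(5)[of "x - \<iota> l"] by (metis less_irrefl order_le_less)
  then show False using x by auto
qed

text \<open>Evaluation against \<open>[1,x]\<close>: with \<open>L = A x - B\<close>, the value \<open>a A + c B\<close> satisfies
  \<open>\<iota>(a A + c B) = A (a + c x) - c L\<close>, so \<open>|a A + c B| \<le> |L| |a + c x| / d(x,K)\<close>.\<close>
lemma span1x_eval_upper:
  assumes dpos: "0 < dist_to_K bv \<iota> x"
  shows "av (a * A + c * B) * dist_to_K bv \<iota> x \<le> bv (\<iota> A * x - \<iota> B) * bv (\<iota> a + \<iota> c * x)"
proof -
  define d L z where "d = dist_to_K bv \<iota> x" and "L = \<iota> A * x - \<iota> B" and "z = \<iota> a + \<iota> c * x"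
  have "\<iota> (a * A + c * B) = \<iota> A * z - \<iota> c * L" unfolding z_def L_def by (simp add: algebra_simps)
  then have "av (a * A + c * B) \<le> max (av A * bv z) (av c * bv L)"
    using va_diff[OF L_abs, of "\<iota> A * z" "\<iota> c * L"] i_abs[of "a * A + c * B"] by (simp add: bv_mult)
  then have "av (a * A + c * B) * d \<le> max (av A * bv z) (av c * bv L) * d"
    using dpos unfolding d_def by (intro mult_right_mono) auto
  also have "\<dots> = max (av A * bv z * d) (av c * bv L * d)"
    using dpos unfolding d_def by (simp add: max_mult_distrib_right)
  also have "\<dots> \<le> bv L * bv z"
  proof (rule max.boundedI)
    have "av A * d \<le> bv L"
    proof (cases "A = 0")
      case False
      have "L = \<iota> A * (x - \<iota> (B / A))" unfolding L_def using False by (simp add: field_simps)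
      moreover have "av A * d \<le> av A * bv (x - \<iota> (B / A))"
        unfolding d_def by (rule mult_left_mono[OF dist_to_K_le]) simp
      ultimately show ?thesis by (simp only: bv_mult i_abs)
    qed (simp add: L_def)
    then have "av A * d * bv z \<le> bv L * bv z" by (rule mult_right_mono) simp
    then show "av A * bv z * d \<le> bv L * bv z" by (simp add: algebra_simps)
    have "av c * d \<le> bv z"
    proof (cases "c = 0")
      case False
      have "z = \<iota> c * (x - \<iota> (- a / c))" unfolding z_def using False by (simp add: field_simps)
      moreover have "av c * d \<le> av c * bv (x - \<iota> (- a / c))"
        unfolding d_def by (rule mult_left_mono[OF dist_to_K_le]) simp
      ultimately show ?thesis by (simp only: bv_mult i_abs)
    qed (simp add: z_def)
    then have "av c * d * bv L \<le> bv z * bv L" by (rule mult_right_mono) simp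
    then show "av c * bv L * d \<le> bv L * bv z" by (simp add: algebra_simps)
  qed
  finally show ?thesis unfolding d_def L_def z_def .
qed

text \<open>The bound is sharp up to any factor \<open>s < 1\<close>: take \<open>a + c x\<close> to be \<open>1\<close> or a near-best
  approximation \<open>x - k\<close> of \<open>x\<close>.\<close>
lemma span1x_eval_lower:
  assumes x: "x \<notin> range \<iota>" and L: "\<iota> A * x - \<iota> B \<noteq> 0" and s: "0 < s" "s < 1"
  obtains a c where "\<iota> a + \<iota> c * x \<noteq> 0"
    "s * bv (\<iota> A * x - \<iota> B) * bv (\<iota> a + \<iota> c * x) \<le> dist_to_K bv \<iota> x * av (a * A + c * B)"
proof -
  define d L where "d = dist_to_K bv \<iota> x" and "L = \<iota> A * x - \<iota> B"
  have dp: "0 < d" using dist_to_K_pos[OF x] d_def by simp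
  have Lp: "0 < bv L" using L va_pos[OF L_abs] L_def by simp
  show ?thesis
  proof (cases "bv L \<le> av A * d")
    case True
    have "s * bv L \<le> 1 * bv L" by (rule mult_right_mono) (use s Lp in auto)
    then have "s * bv L * bv (\<iota> 1 + \<iota> 0 * x) \<le> d * av (1 * A + 0 * B)"
      using True by (simp add: mult.commute)
    then show ?thesis using that[of 1 0] unfolding d_def L_def by simp
  next
    case False
    define r where "r = (if A = 0 then d / s else min (d / s) (bv L / av A))"
    have "d < r"
      using False s dp va_pos[OF K_abs, of A] unfolding r_def by (auto simp: field_simps)
    then obtain k where k: "bv (x - \<iota> k) < r" using dist_to_K_approx d_def by blast
    have xk: "x - \<iota> k \<noteq> 0" using x by auto
    have "bv (\<iota> A * (x - \<iota> k)) < bv L"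
    proof (cases "A = 0")
      case False
      then have "av A * bv (x - \<iota> k) < bv L" using k va_pos[OF K_abs False] unfolding r_def by (simp add: field_simps)
      then show ?thesis by (simp add: bv_mult)
    qed (use Lp in simp)
    then have "bv (- L + \<iota> A * (x - \<iota> k)) = bv L" using va_strict[OF L_abs, of "\<iota> A * (x - \<iota> k)" "- L"] by simp
    moreover have "\<iota> (- k * A + 1 * B) = - L + \<iota> A * (x - \<iota> k)" unfolding L_def by (simp add: algebra_simps)
    ultimately have "av (- k * A + 1 * B) = bv L" using i_abs by metis
    moreover have "s * bv (x - \<iota> k) \<le> d" using k s dp unfolding r_def by (auto simp: field_simps split: if_splits)
    ultimately have "s * bv L * bv (\<iota> (- k) + \<iota> 1 * x) \<le> d * av (- k * A + 1 * B)"
      using Lp mult_left_mono[of "s * bv (x - \<iota> k)" d "bv L"] by (simp add: algebra_simps)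
    then show ?thesis using that[of "- k" 1] xk unfolding d_def L_def by simp
  qed
qed

end

locale sph_immediate_ext = immediate_ext +
  assumes sph: "spherically_complete bv"
begin

lemma nested_centre:
  assumes \<rho>: "\<And>k. 0 < \<rho> k" "\<And>k. \<rho> (Suc k) \<le> \<rho> k" and lam: "\<And>k. av (lam (Suc k) - lam k) \<le> \<rho> k"
  obtains x where "\<And>k. bv (x - \<iota> (lam k)) \<le> \<rho> k"
proof -
  have "vball bv (\<iota> (lam (Suc k))) (\<rho> (Suc k)) \<subseteq> vball bv (\<iota> (lam k)) (\<rho> k)" for k
  proof
    fix y assume "y \<in> vball bv (\<iota> (lam (Suc k))) (\<rho> (Suc k))"
    then have "max (bv (y - \<iota> (lam (Suc k)))) (av (lam (Suc k) - lam k)) \<le> \<rho> k"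
      using \<rho>(2)[of k] lam[of k] unfolding vball_def by simp
    moreover have "y - \<iota> (lam k) = (y - \<iota> (lam (Suc k))) + \<iota> (lam (Suc k) - lam k)" by simp
    then have "bv (y - \<iota> (lam k)) \<le> max (bv (y - \<iota> (lam (Suc k)))) (av (lam (Suc k) - lam k))"
      using va_add[OF L_abs, of "y - \<iota> (lam (Suc k))" "\<iota> (lam (Suc k) - lam k)"] by (simp only: i_abs)
    ultimately have "bv (y - \<iota> (lam k)) \<le> \<rho> k" by linarith
    then show "y \<in> vball bv (\<iota> (lam k)) (\<rho> k)" unfolding vball_def by simp
  qed
  then have "(\<Inter>k. vball bv (\<iota> (lam k)) (\<rho> k)) \<noteq> {}"
    using \<rho>(1) by (intro sph[unfolded spherically_complete_def, rule_format]) blast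
  then show ?thesis using that unfolding vball_def by blast
qed

end

section \<open>Planes without orthogonal pairs\<close>

context dual_plane
begin

definition dist_g2_line where "dist_g2_line = Inf {nrm (g2 - dscale l g1) | l. True}"

lemma dist_g2_line_set: "{nrm (g2 - dscale l g1) | l. True} \<noteq> {}" "bdd_below {nrm (g2 - dscale l g1) | l. True}"
  using nrm_nonneg dual_minus[OF g2 dual_dscale[OF g1]] by (auto intro!: bdd_belowI[of _ 0])

lemma dist_g2_line_le: "dist_g2_line \<le> nrm (g2 - dscale l g1)"
  unfolding dist_g2_line_def using dist_g2_line_set by (auto intro!: cInf_lower)

lemma dist_g2_line_nonneg: "0 \<le> dist_g2_line"
  unfolding dist_g2_line_def using dist_g2_line_set nrm_nonneg[OF dual_minus[OF g2 dual_dscale[OF g1]]]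
  by (intro cInf_greatest) auto

lemma dist_g2_line_approx: assumes "dist_g2_line < r" shows "\<exists>l. nrm (g2 - dscale l g1) < r"
proof (rule ccontr)
  assume "\<not> ?thesis"
  then have "r \<le> dist_g2_line" unfolding dist_g2_line_def using dist_g2_line_set
    by (intro cInf_greatest) (auto simp: not_less)
  then show False using assms by simp
qed

lemma g2_line_ne_zero: "g2 - dscale l g1 \<noteq> 0"
proof
  assume "g2 - dscale l g1 = 0"
  then have "(g2 - dscale l g1) a2 = 0" by simp
  then show False using d12 d22 by simp
qed

text \<open>A best approximation of \<open>g\<^sub>2\<close> on the line \<open>K g\<^sub>1\<close> would be orthogonal to \<open>g\<^sub>1\<close>.\<close>
lemma no_orth_pair_dist_g2_line_less:
  assumes "\<not> has_orth_pair"
  shows "dist_g2_line < nrm (g2 - dscale l g1)"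
proof (rule ccontr)
  let ?h = "g2 - dscale l g1"
  assume "\<not> ?thesis"
  then have eq: "nrm ?h = dist_g2_line" using dist_g2_line_le[of l] by simp
  have hF: "?h \<in> plane" by (intro plane_diff plane_scale g1_plane g2_plane)
  have "orth_pair ?h g1"
  proof (rule orth_pair_of_lower[OF hF g1_plane g2_line_ne_zero g1_nz])
    fix \<alpha> \<beta>
    show "av \<alpha> * nrm ?h \<le> nrm (dscale \<alpha> ?h + dscale \<beta> g1)"
    proof (cases "\<alpha> = 0")
      case True then show ?thesis using nrm_nonneg plane_dual plane_scale g1_plane by simp
    next
      case False
      then have "dscale \<alpha> ?h + dscale \<beta> g1 = dscale \<alpha> (g2 - dscale (l - \<beta> / \<alpha>) g1)"
        by (simp add: dscale_def fun_eq_iff field_simps)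
      then have "nrm (dscale \<alpha> ?h + dscale \<beta> g1) = av \<alpha> * nrm (g2 - dscale (l - \<beta> / \<alpha>) g1)"
        using plane_nrm_dscale plane_diff plane_scale g1_plane g2_plane by simp
      then show ?thesis using eq dist_g2_line_le[of "l - \<beta> / \<alpha>"] by (simp add: mult_left_mono)
    qed
  qed
  then show False using assms has_orth_pair_def by blast
qed

end

locale dual_plane_ext = dual_plane + sph_immediate_ext
begin

text \<open>Near-best approximations \<open>\<lambda>\<^sub>n\<close> of \<open>g\<^sub>2\<close> on \<open>K g\<^sub>1\<close> are the centres of nested balls
  in \<open>K\<^sup>\<or>\<close>.\<close>
lemma near_best_centre:
  obtains lam x where "\<And>n. nrm (g2 - dscale (lam n) g1) < dist_g2_line + inverse (real (Suc n))"
    "\<And>n. bv (x - \<iota> (lam n)) \<le> (dist_g2_line + inverse (real (Suc n))) / nrm g1"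
proof -
  define r where "r n = dist_g2_line + inverse (real (Suc n))" for n
  have "\<forall>n. \<exists>l. nrm (g2 - dscale l g1) < r n" using dist_g2_line_approx unfolding r_def by simp
  from choice[OF this] obtain lam where lam: "\<And>n. nrm (g2 - dscale (lam n) g1) < r n" by blast
  have gd: "\<And>l. g2 - dscale l g1 \<in> dual sc E" using dual_minus[OF g2 dual_dscale[OF g1]] .
  have n1: "nrm g1 > 0" using nrm_pos[OF g1 g1_nz] .
  have rpos: "0 < r n" for n unfolding r_def using dist_g2_line_nonneg by (simp add: add_nonneg_pos)
  have rdec: "r (Suc n) \<le> r n" for n unfolding r_def by (simp add: field_simps)
  have lamdiff: "av (lam m - lam n) * nrm g1 \<le> max (r n) (r m)" for m n
  proof -
    have eq: "dscale (lam m - lam n) g1 = (g2 - dscale (lam n) g1) - (g2 - dscale (lam m) g1)"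
      by (simp add: dscale_def fun_eq_iff algebra_simps)
    have "nrm (dscale (lam m - lam n) g1) \<le> max (nrm (g2 - dscale (lam n) g1)) (nrm (g2 - dscale (lam m) g1))"
      unfolding eq by (rule nrm_diff[OF gd gd])
    moreover have "max (nrm (g2 - dscale (lam n) g1)) (nrm (g2 - dscale (lam m) g1)) \<le> max (r n) (r m)"
      using lam[of n] lam[of m] by (intro max.mono) auto
    ultimately show ?thesis using nrm_dscale[OF g1, of "lam m - lam n"] by linarith
  qed
  obtain x where "\<And>k. bv (x - \<iota> (lam k)) \<le> r k / nrm g1"
  proof (rule nested_centre)
    show "0 < r k / nrm g1" "r (Suc k) / nrm g1 \<le> r k / nrm g1" for k
      using rpos rdec n1 by (simp_all add: divide_right_mono)
    show "av (lam (Suc k) - lam k) \<le> r k / nrm g1" for k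
      using lamdiff[of "Suc k" k] rdec[of k] n1 by (simp add: le_divide_eq)
  qed blast
  then show ?thesis using that lam unfolding r_def by blast
qed

text \<open>Without orthogonal pairs the centre \<open>x\<close> measures every \<open>g\<^sub>2 - l g\<^sub>1\<close> exactly: by the strict
  triangle inequality, \<open>|x - l| = |\<lambda>\<^sub>n - l|\<close> once \<open>\<lambda>\<^sub>n\<close> is closer to \<open>g\<^sub>2\<close> than \<open>l\<close>.\<close>
lemma no_orth_pair_centre:
  assumes nOP: "\<not> has_orth_pair"
  obtains x where "\<And>l. nrm (g2 - dscale l g1) = nrm g1 * bv (x - \<iota> l)"
proof -
  define \<delta> where "\<delta> = dist_g2_line"
  obtain lam x where lam: "\<And>n. nrm (g2 - dscale (lam n) g1) < \<delta> + inverse (real (Suc n))"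
    and x: "\<And>n. bv (x - \<iota> (lam n)) \<le> (\<delta> + inverse (real (Suc n))) / nrm g1"
    using near_best_centre unfolding \<delta>_def by blast
  have gd: "\<And>l. g2 - dscale l g1 \<in> dual sc E" using dual_minus[OF g2 dual_dscale[OF g1]] .
  have n1: "nrm g1 > 0" using nrm_pos[OF g1 g1_nz] .
  have "nrm (g2 - dscale l g1) = nrm g1 * bv (x - \<iota> l)" for l
  proof -
    define p where "p = nrm (g2 - dscale l g1)"
    have "0 < p - \<delta>" using no_orth_pair_dist_g2_line_less[OF nOP] p_def \<delta>_def by simp
    then obtain n where "inverse (real (Suc n)) < p - \<delta>" using reals_Archimedean by blast
    then have rn: "\<delta> + inverse (real (Suc n)) < p" by linarith
    have "dscale (l - lam n) g1 = (g2 - dscale (lam n) g1) - (g2 - dscale l g1)"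
      by (simp add: dscale_def fun_eq_iff algebra_simps)
    then have "nrm (dscale (l - lam n) g1) = p" using nrm_diff_strict[OF gd gd] lam[of n] rn p_def by simp
    then have ap: "av (l - lam n) * nrm g1 = p" using nrm_dscale[OF g1] by simp
    have "(\<delta> + inverse (real (Suc n))) / nrm g1 < p / nrm g1" using rn n1 by (simp add: divide_strict_right_mono)
    then have "bv (x - \<iota> (lam n)) < p / nrm g1" using x[of n] by linarith
    also have "\<dots> = bv (\<iota> (lam n) - \<iota> l)"
      using ap n1 i_abs[of "lam n - l"] va_commute[OF K_abs] by (simp add: field_simps del: i_abs)
    finally have "bv ((\<iota> (lam n) - \<iota> l) + (x - \<iota> (lam n))) = bv (\<iota> (lam n) - \<iota> l)"
      using va_strict[OF L_abs] by blast
    then have "bv (x - \<iota> l) = av (l - lam n)"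
      using i_abs[of "l - lam n"] va_commute[OF L_abs, of "\<iota> l" "\<iota> (lam n)"] by (simp add: algebra_simps)
    then show ?thesis using ap p_def by (simp add: mult.commute)
  qed
  then show ?thesis using that by blast
qed

definition to_span1x where "to_span1x x g = \<iota> (g a1) + \<iota> (g a2) * x"

lemma to_span1x_add: "to_span1x x (f + g) = to_span1x x f + to_span1x x g"
  and to_span1x_dscale: "to_span1x x (dscale c f) = \<iota> c * to_span1x x f"
  unfolding to_span1x_def by (simp_all add: algebra_simps)

lemma to_span1x_image: "to_span1x x ` plane = span1x \<iota> x"
proof
  show "to_span1x x ` plane \<subseteq> span1x \<iota> x" unfolding to_span1x_def span1x_def by blast
  show "span1x \<iota> x \<subseteq> to_span1x x ` plane"
  proof
    fix z assume "z \<in> span1x \<iota> x"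
    then obtain a c where z: "z = \<iota> a + \<iota> c * x" unfolding span1x_def by blast
    have "to_span1x x (dscale a g1 + dscale c g2) = z" unfolding to_span1x_def z using d11 d12 d21 d22 by simp
    then show "z \<in> to_span1x x ` plane" using plane_memI by blast
  qed
qed

lemma to_span1x_inj: assumes xK: "x \<notin> range \<iota>" shows "inj_on (to_span1x x) plane"
proof (rule inj_onI)
  fix g h assume gh: "g \<in> plane" "h \<in> plane" "to_span1x x g = to_span1x x h"
  have "g a2 = h a2"
  proof (rule ccontr)
    assume ne: "g a2 \<noteq> h a2"
    from gh(3) have "(\<iota> (g a2) - \<iota> (h a2)) * x = \<iota> (h a1) - \<iota> (g a1)"
      unfolding to_span1x_def by (simp add: algebra_simps)
    then have "x = \<iota> ((h a1 - g a1) / (g a2 - h a2))" using ne by (simp add: field_simps)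
    then show False using xK by blast
  qed
  moreover from this have "g a1 = h a1" using gh(3) unfolding to_span1x_def by simp
  ultimately show "g = h" using plane_coord gh(1,2) by metis
qed

lemma to_span1x_norm:
  assumes key: "\<And>l. nrm (g2 - dscale l g1) = nrm g1 * bv (x - \<iota> l)" and g: "g \<in> plane"
  shows "nrm g1 * bv (to_span1x x g) = nrm g"
proof -
  define \<alpha> \<beta> where "\<alpha> = g a1" and "\<beta> = g a2"
  have g_eq: "g = dscale \<alpha> g1 + dscale \<beta> g2" using plane_coord[OF g] unfolding \<alpha>_def \<beta>_def .
  have T_eq: "to_span1x x g = \<iota> \<alpha> + \<iota> \<beta> * x" unfolding to_span1x_def \<alpha>_def \<beta>_def ..
  show ?thesis
  proof (cases "\<beta> = 0")
    case True
    have "nrm g = av \<alpha> * nrm g1" unfolding g_eq using True nrm_dscale[OF g1] by simp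
    then show ?thesis using True T_eq by (simp add: mult.commute)
  next
    case False
    define l where "l = - \<alpha> / \<beta>"
    have "dscale \<alpha> g1 + dscale \<beta> g2 = dscale \<beta> (g2 - dscale l g1)"
      using False by (simp add: l_def dscale_def fun_eq_iff field_simps)
    then have "nrm g = av \<beta> * (nrm g1 * bv (x - \<iota> l))"
      unfolding g_eq using nrm_dscale[OF dual_minus[OF g2 dual_dscale[OF g1]]] key by simp
    moreover have "to_span1x x g = \<iota> \<beta> * (x - \<iota> l)" unfolding T_eq l_def using False by (simp add: field_simps)
    ultimately show ?thesis by (simp add: bv_mult)
  qed
qed

lemma centre_iso_span1x:
  assumes key: "\<And>l. nrm (g2 - dscale l g1) = nrm g1 * bv (x - \<iota> l)"
  shows "x \<notin> range \<iota>" and "iso_span1x bv \<iota> dscale plane nrm x (nrm g1)"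
proof -
  show xK: "x \<notin> range \<iota>"
  proof
    assume "x \<in> range \<iota>"
    then obtain l where "x = \<iota> l" by blast
    then have "nrm (g2 - dscale l g1) = 0" using key[of l] by simp
    then show False using nrm_zero_iff[OF dual_minus[OF g2 dual_dscale[OF g1]]] g2_line_ne_zero by blast
  qed
  show "iso_span1x bv \<iota> dscale plane nrm x (nrm g1)"
    unfolding iso_span1x_def bij_betw_def
    using to_span1x_inj[OF xK] to_span1x_image to_span1x_add to_span1x_dscale to_span1x_norm[OF key] by blast
qed

lemma no_orth_pair_iso_span1x:
  assumes "\<not> has_orth_pair"
  obtains x t where "x \<notin> range \<iota>" "0 < t" "iso_span1x bv \<iota> dscale plane nrm x t"
proof -
  obtain x where key: "\<And>l. nrm (g2 - dscale l g1) = nrm g1 * bv (x - \<iota> l)"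
    using no_orth_pair_centre[OF assms] by blast
  show ?thesis
    by (rule that[of x "nrm g1"]) (use centre_iso_span1x[OF key] nrm_pos[OF g1 g1_nz] in auto)
qed

lemma iso_span1x_coords:
  assumes "iso_span1x bv \<iota> dscale plane nrm x t"
  obtains e1 ex where "e1 \<in> plane" "ex \<in> plane"
    "\<And>g. g \<in> plane \<Longrightarrow> \<exists>a c. g = dscale a e1 + dscale c ex"
    "\<And>a c. nrm (dscale a e1 + dscale c ex) = t * bv (\<iota> a + \<iota> c * x)"
proof -
  obtain T where T: "bij_betw T plane (span1x \<iota> x)" "\<And>f g. f \<in> plane \<Longrightarrow> g \<in> plane \<Longrightarrow> T (f + g) = T f + T g"
    "\<And>c f. f \<in> plane \<Longrightarrow> T (dscale c f) = \<iota> c * T f" "\<And>f. f \<in> plane \<Longrightarrow> t * bv (T f) = nrm f"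
    using assms unfolding iso_span1x_def by blast
  have img: "T ` plane = span1x \<iota> x" using bij_betw_imp_surj_on[OF T(1)] .
  have span1: "\<iota> a + \<iota> c * x \<in> span1x \<iota> x" for a c by (auto simp: span1x_def)
  have one: "1 \<in> T ` plane" and x: "x \<in> T ` plane" using span1[of 1 0] span1[of 0 1] img by simp_all
  obtain e1 where e1: "e1 \<in> plane" "T e1 = 1" using one by (metis imageE)
  obtain ex where ex: "ex \<in> plane" "T ex = x" using x by (metis imageE)
  have lin: "T (dscale a e1 + dscale c ex) = \<iota> a + \<iota> c * x" for a c
    using T(2)[OF plane_scale[OF e1(1)] plane_scale[OF ex(1)]] T(3)[OF e1(1)] T(3)[OF ex(1)] e1(2) ex(2) by simp
  show ?thesis
  proof (rule that[OF e1(1) ex(1)])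
    fix g assume g: "g \<in> plane"
    then obtain a c where Tg: "T g = \<iota> a + \<iota> c * x" using img unfolding span1x_def by blast
    have "g = dscale a e1 + dscale c ex"
      using bij_betw_imp_inj_on[OF T(1)] g plane_comb[OF e1(1) ex(1)] Tg lin[of a c] by (metis inj_onD)
    then show "\<exists>a c. g = dscale a e1 + dscale c ex" by blast
  next
    show "nrm (dscale a e1 + dscale c ex) = t * bv (\<iota> a + \<iota> c * x)" for a c
      using T(4)[OF plane_comb[OF e1(1) ex(1)]] lin by simp
  qed
qed

lemma span_coords_value_ne_zero:
  assumes xK: "x \<notin> range \<iota>" and v: "v \<in> E" "v \<notin> ker"
    and span: "\<And>g. g \<in> plane \<Longrightarrow> \<exists>a c. g = dscale a e1 + dscale c ex"
  shows "\<iota> (e1 v) * x - \<iota> (ex v) \<noteq> 0"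
proof
  assume L0: "\<iota> (e1 v) * x - \<iota> (ex v) = 0"
  have "e1 v = 0"
  proof (rule ccontr)
    assume "e1 v \<noteq> 0"
    then have "x = \<iota> (ex v / e1 v)" using L0 by (simp add: field_simps)
    then show False using xK by blast
  qed
  moreover from this have "ex v = 0" using L0 by simp
  ultimately have "g v = 0" if "g \<in> plane" for g using span[OF that] by auto
  then show False using v g1_plane g2_plane ker_def by auto
qed

lemma span_coords_qnorm:
  assumes xK: "x \<notin> range \<iota>" and t: "0 < t" and v: "v \<in> E" "v \<notin> ker"
    and e: "e1 \<in> plane" "ex \<in> plane" "\<And>g. g \<in> plane \<Longrightarrow> \<exists>a c. g = dscale a e1 + dscale c ex"
      "\<And>a c. nrm (dscale a e1 + dscale c ex) = t * bv (\<iota> a + \<iota> c * x)"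
  shows "qnorm v * t * dist_to_K bv \<iota> x = bv (\<iota> (e1 v) * x - \<iota> (ex v))"
proof -
  define d L where "d = dist_to_K bv \<iota> x" and "L = \<iota> (e1 v) * x - \<iota> (ex v)"
  have dp: "0 < d" unfolding d_def using dist_to_K_pos[OF xK] .
  have "L \<noteq> 0" unfolding L_def using span_coords_value_ne_zero[OF xK v e(3)] .
  define M where "M = bv L / (t * d)"
  have "qnorm v \<le> M"
  proof (rule qnorm_le_of_bound[OF v])
    fix g assume "g \<in> plane"
    then obtain a c where g: "g = dscale a e1 + dscale c ex" using e(3) by blast
    have "av (a * e1 v + c * ex v) * d \<le> bv L * bv (\<iota> a + \<iota> c * x)"
      using span1x_eval_upper[OF dist_to_K_pos[OF xK]] unfolding d_def L_def .
    then have "av (g v) \<le> bv L * bv (\<iota> a + \<iota> c * x) / d" using g dp by (simp add: le_divide_eq)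
    moreover have "M * nrm g = bv L * bv (\<iota> a + \<iota> c * x) / d" using g e(4) t unfolding M_def by simp
    ultimately show "av (g v) \<le> M * nrm g" by simp
  qed
  moreover have "M \<le> qnorm v"
  proof (rule qnorm_ge_of_approx[OF v(1)])
    fix s :: real assume s: "0 < s" "s < 1"
    obtain a c where z: "\<iota> a + \<iota> c * x \<noteq> 0" and
      le: "s * bv L * bv (\<iota> a + \<iota> c * x) \<le> d * av (a * e1 v + c * ex v)"
      by (rule span1x_eval_lower[OF xK \<open>L \<noteq> 0\<close>[unfolded L_def] s, folded L_def d_def])
    define g where "g = dscale a e1 + dscale c ex"
    have ng: "nrm g = t * bv (\<iota> a + \<iota> c * x)" using e(4) g_def by simp
    then have "g \<noteq> 0" using z t by auto
    have "s * M * nrm g = s * bv L * bv (\<iota> a + \<iota> c * x) / d" using ng t unfolding M_def by simp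
    also have "\<dots> \<le> av (g v)" using le dp by (simp add: g_def divide_le_eq mult.commute)
    finally have "s * M * nrm g \<le> av (g v)" .
    moreover have "g \<in> plane" unfolding g_def by (rule plane_comb[OF e(1,2)])
    ultimately show "\<exists>g\<in>plane. g \<noteq> 0 \<and> s * M * nrm g \<le> av (g v)" using \<open>g \<noteq> 0\<close> by blast
  qed
  ultimately have "qnorm v = bv L / (t * d)" unfolding M_def by linarith
  then have "qnorm v * t * d = bv L" using t dp by simp
  then show ?thesis unfolding d_def L_def .
qed

lemma iso_span1x_qnorm_value:
  assumes xK: "x \<notin> range \<iota>" and t: "0 < t" and iso: "iso_span1x bv \<iota> dscale plane nrm x t"
    and v: "v \<in> E" "v \<notin> ker"
  shows "qnorm v * t * dist_to_K bv \<iota> x \<in> value_group av"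
proof -
  obtain e1 ex where e: "e1 \<in> plane" "ex \<in> plane"
    "\<And>g. g \<in> plane \<Longrightarrow> \<exists>a c. g = dscale a e1 + dscale c ex"
    "\<And>a c. nrm (dscale a e1 + dscale c ex) = t * bv (\<iota> a + \<iota> c * x)"
    using iso_span1x_coords[OF iso] by blast
  have "\<iota> (e1 v) * x - \<iota> (ex v) \<noteq> 0" using span_coords_value_ne_zero[OF xK v e(3)] .
  then have "bv (\<iota> (e1 v) * x - \<iota> (ex v)) \<in> value_group bv" unfolding value_group_def by blast
  then show ?thesis using span_coords_qnorm[OF xK t v e] value_groups_eq by simp
qed

end

section \<open>Characterisation of (SE)\<close>

definition plane_condition where
  "plane_condition av bv \<iota> E N F \<longleftrightarrow> orth_dim dscale F (opnorm av E N) = 2 \<or>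
     (\<exists>x t. x \<notin> range \<iota> \<and> 0 < t \<and> t * dist_to_K bv \<iota> x \<notin> value_group av
        \<and> iso_span1x bv \<iota> dscale F (opnorm av E N) x t)"

context dual_plane_ext
begin

text \<open>Both directions rest on \<open>qnorm v \<cdot> t \<cdot> d(x,K) \<in> V\<^sub>K\<close>: thus \<open>t \<cdot> d(x,K) \<notin> V\<^sub>K\<close>
  iff no quotient norm lies in \<open>V\<^sub>K\<close>.\<close>
lemma plane_condition_imp_extend:
  assumes pc: "plane_condition av bv \<iota> E N plane"
  shows line_functionals_extend
proof (cases has_orth_pair)
  case True then show ?thesis using orth_pair_imp_extend has_orth_pair_def by blast
next
  case False
  then obtain x t where xt: "x \<notin> range \<iota>" "0 < t" "t * dist_to_K bv \<iota> x \<notin> value_group av"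
    "iso_span1x bv \<iota> dscale plane nrm x t" using pc orth_dim_2_iff unfolding plane_condition_def by blast
  show ?thesis
  proof (rule qnorm_notin_value_group_imp_extend)
    fix v assume v: "v \<in> E" "v \<notin> ker"
    have a: "qnorm v * t * dist_to_K bv \<iota> x \<in> value_group av" using iso_span1x_qnorm_value[OF xt(1,2,4) v] .
    show "qnorm v \<notin> value_group av"
    proof
      assume "qnorm v \<in> value_group av"
      then have "(qnorm v * t * dist_to_K bv \<iota> x) / qnorm v \<in> value_group av"
        using value_group_divide[OF av a] by blast
      then show False using xt(3) qnorm_pos[OF v] by simp
    qed
  qed
qed

lemma extend_imp_plane_condition:
  assumes ext: line_functionals_extend
  shows "plane_condition av bv \<iota> E N plane"
proof (cases has_orth_pair)
  case True then show ?thesis using orth_dim_2_iff unfolding plane_condition_def by blast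
next
  case False
  obtain x t where xt: "x \<notin> range \<iota>" "0 < t" "iso_span1x bv \<iota> dscale plane nrm x t"
    using no_orth_pair_iso_span1x[OF False] by blast
  have a1W: "a1 \<notin> ker" using d11 ker_def by auto
  have nq: "qnorm a1 \<notin> value_group av"
    using extend_no_orth_pair_imp_qnorm_notin_value_group[OF False ext a1 a1W] .
  have a: "qnorm a1 * t * dist_to_K bv \<iota> x \<in> value_group av" using iso_span1x_qnorm_value[OF xt a1 a1W] .
  have "t * dist_to_K bv \<iota> x \<notin> value_group av"
  proof
    assume td: "t * dist_to_K bv \<iota> x \<in> value_group av"
    then have "(qnorm a1 * t * dist_to_K bv \<iota> x) / (t * dist_to_K bv \<iota> x) \<in> value_group av"
      using value_group_divide[OF av a] by blast
    then show False using nq xt(2) dist_to_K_pos[OF xt(1)] by simp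
  qed
  then show ?thesis using xt unfolding plane_condition_def by blast
qed

lemma plane_condition_iff_extend: "plane_condition av bv \<iota> E N plane \<longleftrightarrow> line_functionals_extend"
  using plane_condition_imp_extend extend_imp_plane_condition by blast

end

context dual_plane
begin

lemma hyperplane_functional_extends:
  assumes H: "subspace H" "H \<subseteq> E" and f1: "f1 \<in> dual sc H" "opnorm av H N f1 = 1"
    and a1H: "a1 \<in> H" and g1H: "\<And>x. x \<in> H \<Longrightarrow> g1 x = f1 x" and g2H: "\<And>x. x \<in> E \<Longrightarrow> g2 x = 0 \<longleftrightarrow> x \<in> H"
    and ext: line_functionals_extend
  shows "\<exists>g\<in>dual sc E. (\<forall>x\<in>H. g x = f1 x) \<and> nrm g \<le> 1"
proof -
  have ker_eq: "x \<in> ker \<longleftrightarrow> x \<in> H \<and> f1 x = 0" for x using g1H g2H H(2) ker_def by auto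
  have f1a1: "f1 a1 = 1" using g1H a1H d11 by simp
  have decomp: "x - sc (f1 x) a1 \<in> ker" if x: "x \<in> H" for x
    using ker_eq subspace_diff[OF H(1) x subspace_scale[OF H(1) a1H]]
      dual_diff[OF H(1) f1(1) x subspace_scale[OF H(1) a1H]] dual_scale[OF f1(1) a1H] f1a1 by simp
  have "1 \<le> qnorm a1"
  proof (rule qnorm_greatest[OF a1])
    fix w assume "w \<in> ker"
    then have w: "w \<in> H" "f1 w = 0" using ker_eq by auto
    then have "f1 (a1 + w) = 1" using dual_add[OF f1(1) a1H w(1)] f1a1 by simp
    then show "1 \<le> N (a1 + w)"
      using opnorm_bound[OF H f1(1) subspace_add[OF H(1) a1H w(1)]] f1(2) by simp
  qed
  moreover have "opnorm av H N f1 \<le> inverse (qnorm a1)"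
  proof (rule opnorm_least[OF H f1(1)])
    show "0 \<le> inverse (qnorm a1)" using qnorm_nonneg[OF a1] by simp
    fix x assume x: "x \<in> H"
    have "av (f1 x) * qnorm a1 \<le> N (sc (f1 x) a1 + (x - sc (f1 x) a1))"
      using qnorm_scale_le[OF a1 decomp[OF x]] .
    then show "av (f1 x) \<le> inverse (qnorm a1) * N x" using calculation by (simp add: field_simps)
  qed
  ultimately have "qnorm a1 = av 1" using f1(2) by (simp add: field_simps)
  then obtain g where g: "g \<in> plane" "g a1 = 1" "nrm g \<le> 1"
    using ext a1 unfolding line_functionals_extend_def by (metis one_neq_zero)
  have "g x = f1 x" if x: "x \<in> H" for x
    using plane_vanish[OF g(1) decomp[OF x]] plane_eval[OF g(1) _ a1] x H(2) g(2) by auto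
  then show ?thesis using plane_dual[OF g(1)] g(3) by blast
qed

end

context na_space
begin

lemma hyperplane_coordinate:
  assumes H: "subspace H" "H \<subseteq> E" and b: "b \<notin> H" and span: "\<forall>x\<in>E. \<exists>k. x - sc k b \<in> H"
  obtains \<beta> where "\<beta> \<in> dual sc E" "\<And>x. x \<in> E \<Longrightarrow> x - sc (\<beta> x) b \<in> H"
    "\<And>x k. x - sc k b \<in> H \<Longrightarrow> x \<in> E \<Longrightarrow> \<beta> x = k"
proof -
  have uniq: "k = k'" if "x - sc k b \<in> H" "x - sc k' b \<in> H" for x k k'
  proof (rule ccontr)
    assume ne: "k \<noteq> k'"
    have "sc (k' - k) b \<in> H" using subspace_diff[OF H(1) that] by (simp add: scale_left_diff_distrib)
    then have "sc (inverse (k' - k)) (sc (k' - k) b) \<in> H" using subspace_scale[OF H(1)] by blast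
    then show False using ne b by simp
  qed
  define \<beta> where "\<beta> x = (if x \<in> E then THE k. x - sc k b \<in> H else 0)" for x
  have \<beta>eq: "\<beta> x = k" if "x - sc k b \<in> H" "x \<in> E" for x k
    unfolding \<beta>_def using that uniq by (auto intro: the_equality)
  have \<beta>H: "x - sc (\<beta> x) b \<in> H" if "x \<in> E" for x
    using bspec[OF span that] \<beta>eq that by metis
  have "\<beta> \<in> dual sc E"
    unfolding dual_def
  proof (intro CollectI conjI ballI allI impI)
    fix x y assume xy: "x \<in> E" "y \<in> E"
    have "(x + y) - sc (\<beta> x + \<beta> y) b = (x - sc (\<beta> x) b) + (y - sc (\<beta> y) b)"
      by (simp add: scale_left_distrib algebra_simps)
    then show "\<beta> (x + y) = \<beta> x + \<beta> y"
      using \<beta>eq subspace_add[OF H(1) \<beta>H[OF xy(1)] \<beta>H[OF xy(2)]] E_add[OF xy] by metis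
  next
    fix c x assume x: "x \<in> E"
    have "sc c x - sc (c * \<beta> x) b = sc c (x - sc (\<beta> x) b)" by (simp add: scale_right_diff_distrib)
    then show "\<beta> (sc c x) = c * \<beta> x" using \<beta>eq subspace_scale[OF H(1) \<beta>H[OF x]] E_scale[OF x] by metis
  qed (simp add: \<beta>_def)
  then show ?thesis using that \<beta>H \<beta>eq by blast
qed

lemma dual_extend_along_projection:
  assumes H: "subspace H" "H \<subseteq> E" and f: "f \<in> dual sc H" and \<beta>: "\<beta> \<in> dual sc E"
    and \<beta>H: "\<And>x. x \<in> E \<Longrightarrow> x - sc (\<beta> x) b \<in> H"
  shows "(\<lambda>x. if x \<in> E then f (x - sc (\<beta> x) b) else 0) \<in> dual sc E"
  unfolding dual_def
proof (intro CollectI conjI ballI allI impI)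
  fix x y assume xy: "x \<in> E" "y \<in> E"
  have eq: "(x + y) - sc (\<beta> (x + y)) b = (x - sc (\<beta> x) b) + (y - sc (\<beta> y) b)"
    using dual_add[OF \<beta> xy] by (simp add: scale_left_distrib algebra_simps)
  have "f ((x + y) - sc (\<beta> (x + y)) b) = f (x - sc (\<beta> x) b) + f (y - sc (\<beta> y) b)"
    unfolding eq by (rule dual_add[OF f \<beta>H[OF xy(1)] \<beta>H[OF xy(2)]])
  then show "(if x + y \<in> E then f (x + y - sc (\<beta> (x + y)) b) else 0)
      = (if x \<in> E then f (x - sc (\<beta> x) b) else 0) + (if y \<in> E then f (y - sc (\<beta> y) b) else 0)"
    using xy E_add[OF xy] by simp
next
  fix c x assume x: "x \<in> E"
  have eq: "sc c x - sc (\<beta> (sc c x)) b = sc c (x - sc (\<beta> x) b)"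
    using dual_scale[OF \<beta> x] by (simp add: scale_right_diff_distrib)
  have "f (sc c x - sc (\<beta> (sc c x)) b) = c * f (x - sc (\<beta> x) b)"
    unfolding eq by (rule dual_scale[OF f \<beta>H[OF x]])
  then show "(if sc c x \<in> E then f (sc c x - sc (\<beta> (sc c x)) b) else 0) = c * (if x \<in> E then f (x - sc (\<beta> x) b) else 0)"
    using x E_scale[OF x] by simp
qed simp

lemma SE_imp_plane_condition:
  fixes bv :: "'c::field \<Rightarrow> real" and \<iota> :: "'a \<Rightarrow> 'c"
  assumes bv: "nonarch_abs bv" "spherically_complete bv" "immediate_extension av bv \<iota>"
    and se: "SE av sc E N" and F: "dv.subspace F" "F \<subseteq> dual sc E" "dv.dim F = 2"
  shows "plane_condition av bv \<iota> E N F"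
proof -
  obtain g1 g2 a1 a2 where s: "g1 \<in> dual sc E" "g2 \<in> dual sc E" "a1 \<in> E" "a2 \<in> E"
    "g1 a1 = 1" "g1 a2 = 0" "g2 a1 = 0" "g2 a2 = 1" "F = {dscale a g1 + dscale b g2 | a b. True}"
    by (rule plane_biorthogonal_basis[OF F])
  interpret P: dual_plane_ext sc av E N g1 g2 a1 a2 bv \<iota>
    by unfold_locales (use s bv av compl nns fdim in auto)
  have "P.plane = F" using s(9) P.plane_def by simp
  then show ?thesis using P.plane_condition_iff_extend P.SE_imp_extend[OF se] by simp
qed

lemma opnorm_one_attains_one:
  assumes X: "subspace X" "X \<subseteq> E" and f: "f \<in> dual sc X" "opnorm av X N f = 1"
  obtains v where "v \<in> X" "f v = 1"
proof -
  have "\<exists>x\<in>X. f x \<noteq> 0" using opnorm_least[OF X f(1), of 0] f(2) by force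
  then obtain x where x: "x \<in> X" "f x \<noteq> 0" by blast
  then show ?thesis using that[of "sc (inverse (f x)) x"] subspace_scale[OF X(1)] dual_scale[OF f(1)] by simp
qed

text \<open>The extension happens inside the plane spanned by \<open>f\<^sub>1 \<circ> \<pi>\<close> and the coordinate \<open>\<beta>\<close>,
  where \<open>\<pi> x = x - \<beta>(x) b\<close> projects onto \<open>H\<close>.\<close>
lemma extend_across_hyperplane:
  fixes bv :: "'c::field \<Rightarrow> real" and \<iota> :: "'a \<Rightarrow> 'c"
  assumes bv: "nonarch_abs bv" "spherically_complete bv" "immediate_extension av bv \<iota>"
    and planes: "\<forall>F. dv.subspace F \<and> F \<subseteq> dual sc E \<and> dv.dim F = 2 \<longrightarrow> plane_condition av bv \<iota> E N F"
    and H: "subspace H" "H \<subseteq> E" "b \<in> E" "b \<notin> H" "\<forall>x\<in>E. \<exists>k. x - sc k b \<in> H"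
    and f1: "f1 \<in> dual sc H" "opnorm av H N f1 = 1"
  shows "\<exists>g\<in>dual sc E. (\<forall>x\<in>H. g x = f1 x) \<and> nrm g \<le> 1"
proof -
  obtain v where v: "v \<in> H" "f1 v = 1" by (rule opnorm_one_attains_one[OF H(1,2) f1])
  obtain \<beta> where \<beta>: "\<beta> \<in> dual sc E" "\<And>x. x \<in> E \<Longrightarrow> x - sc (\<beta> x) b \<in> H"
    "\<And>x k. x - sc k b \<in> H \<Longrightarrow> x \<in> E \<Longrightarrow> \<beta> x = k"
    using hyperplane_coordinate[OF H(1,2,4,5)] by metis
  have \<beta>0: "\<beta> x = 0 \<longleftrightarrow> x \<in> H" if x: "x \<in> E" for x
  proof
    assume "\<beta> x = 0"
    then show "x \<in> H" using \<beta>(2)[OF x] by simp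
  next
    assume "x \<in> H"
    then show "\<beta> x = 0" using \<beta>(3)[of x 0] x by simp
  qed
  define g1 where "g1 x = (if x \<in> E then f1 (x - sc (\<beta> x) b) else 0)" for x
  have g1H: "g1 x = f1 x" if "x \<in> H" for x
  proof -
    have "x \<in> E" "\<beta> x = 0" using that H(2) \<beta>0 by auto
    then show ?thesis unfolding g1_def by simp
  qed
  have "g1 b = 0" "\<beta> b = 1" using \<beta>(3)[of b 1] \<beta>0 H(3) subspace_0[OF H(1)] dual_0[OF H(1) f1(1)]
    unfolding g1_def by auto
  then interpret P: dual_plane_ext sc av E N g1 \<beta> v b bv \<iota>
    using dual_extend_along_projection[OF H(1,2) f1(1) \<beta>(1,2)] g1H v \<beta>0 H(2,3) \<beta>(1) bv av compl nns fdim
    unfolding g1_def[symmetric] by unfold_locales auto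
  have "plane_condition av bv \<iota> E N P.plane" using planes P.plane_subspace P.plane_dual P.plane_dim by blast
  then have ext: "P.line_functionals_extend" using P.plane_condition_iff_extend by blast
  show ?thesis
    by (rule P.hyperplane_functional_extends[OF H(1,2) f1 v(1)]) (use g1H \<beta>0 ext in auto)
qed

lemma SE_if_hyperplanes_and_planes:
  fixes bv :: "'c::field \<Rightarrow> real" and \<iota> :: "'a \<Rightarrow> 'c"
  assumes bv: "nonarch_abs bv" "spherically_complete bv" "immediate_extension av bv \<iota>"
    and hyp: "\<forall>D. subspace D \<and> D \<subseteq> E \<and> dim D + 1 = dim E \<longrightarrow> SE av sc D N"
    and planes: "\<forall>F. dv.subspace F \<and> F \<subseteq> dual sc E \<and> dv.dim F = 2 \<longrightarrow> plane_condition av bv \<iota> E N F"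
  shows "SE av sc E N"
  unfolding SE_def
proof (intro allI impI)
  fix D f assume "subspace D \<and> D \<subseteq> E \<and> f \<in> dual sc D \<and> opnorm av D N f = 1"
  then have D: "subspace D" "D \<subseteq> E" and fd: "f \<in> dual sc D" and fn: "opnorm av D N f = 1" by auto
  show "\<exists>g\<in>dual sc E. (\<forall>x\<in>D. g x = f x) \<and> nrm g = 1"
  proof (cases "D = E")
    case True then show ?thesis using fd fn by auto
  next
    case False
    obtain H b where H: "subspace H" "D \<subseteq> H" "H \<subseteq> E" "dim H + 1 = dim E" "b \<in> E" "b \<notin> H"
      "\<forall>x\<in>E. \<exists>k. x - sc k b \<in> H"
      by (rule hyperplane_exists[OF D False])
    have "SE av sc H N" using hyp H(1,3,4) by blast
    then obtain f1 where f1: "f1 \<in> dual sc H" "\<And>x. x \<in> D \<Longrightarrow> f1 x = f x" "opnorm av H N f1 = 1"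
      using D fd fn H(2) unfolding SE_def by blast
    obtain g where g: "g \<in> dual sc E" "\<And>x. x \<in> H \<Longrightarrow> g x = f1 x" "nrm g \<le> 1"
      using extend_across_hyperplane[OF bv planes H(1,3,5,6,7) f1(1,3)] by blast
    have gD: "\<forall>x\<in>D. g x = f x" using g(2) f1(2) H(2) by auto
    then have "1 \<le> nrm g" using opnorm_ext_ge[of D E g f] D E_subspace g(1) fd fn by auto
    then show ?thesis using g(1,3) gD by (intro bexI[of _ g]) auto
  qed
qed
end

theorem mainTheorem7:
  fixes av :: "'a::field \<Rightarrow> real" and bv :: "'b::field \<Rightarrow> real" and \<iota> :: "'a \<Rightarrow> 'b"
    and sc :: "'a \<Rightarrow> 'e::ab_group_add \<Rightarrow> 'e" and E :: "'e set" and N :: "'e \<Rightarrow> real"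
    and n :: nat
  assumes "nonarch_abs av" and "nontrivial_abs av" and "abs_complete av"
    and "\<not> spherically_complete av"
    and "nonarch_abs bv" and "spherically_complete bv" and "immediate_extension av bv \<iota>"
    and "vector_space sc" and "na_normed_space av sc E N"
    and "fin_dim sc E" and "vector_space.dim sc E = n"
  shows "SE av sc E N \<longleftrightarrow>
    ((\<forall>D. module.subspace sc D \<and> D \<subseteq> E \<and> vector_space.dim sc D + 1 = n
          \<longrightarrow> SE av sc D N)
     \<and> (\<forall>F. module.subspace dscale F \<and> F \<subseteq> dual sc E \<and> vector_space.dim dscale F = 2
          \<longrightarrow> orth_dim dscale F (opnorm av E N) = 2
              \<or> (\<exists>x t. x \<notin> range \<iota> \<and> 0 < t \<and> t * dist_to_K bv \<iota> x \<notin> value_group av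
                    \<and> iso_span1x bv \<iota> dscale F (opnorm av E N) x t)))"
proof -
  interpret na_space sc av E N
    by (rule na_space.intro[OF assms(8)]) (unfold_locales, use assms in auto)
  have "SE av sc E N \<longleftrightarrow>
    (\<forall>D. subspace D \<and> D \<subseteq> E \<and> dim D + 1 = n \<longrightarrow> SE av sc D N)
    \<and> (\<forall>F. dv.subspace F \<and> F \<subseteq> dual sc E \<and> dv.dim F = 2 \<longrightarrow> plane_condition av bv \<iota> E N F)"
    using SE_subspace SE_imp_plane_condition[OF assms(5-7)] SE_if_hyperplanes_and_planes[OF assms(5-7)] assms(11)
    by blast
  then show ?thesis unfolding plane_condition_def .
qed

end
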